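(* Let $G$ be a finite group acting on $X=G$ by left multiplication, so that $\mathbb{C}X=\mathbb{C}G$ is the regular module. Let $\{1\}=G_1<\cdots<G_n=G$ be a chain of subgroups with $\mathcal{R}(G_1),\dots,\mathcal{R}(G_n)$ compatible with respect to $\mathbb{C}X$, and let $\mathcal{B}_1,\dots,\mathcal{B}_n$ be as in the standing setup below. Put $q_j=[G_j:G_{j-1}]$. Then for every $f\in\mathbb{C}G$, $[f]_{\mathcal{B}_n}$ can be computed from $[f]_{\mathcal{B}_1}$ (by successively multiplying by $C(\mathcal{B}_2,\mathcal{B}_1),\dots,C(\mathcal{B}_n,\mathcal{B}_{n-1})$, using only their nonzero entries) with strictly fewer than \[2\sum_{j=2}^n q_j^2\,q_{j+1}\cdots q_n\,d^3(G_{j-1})\] complex arithmetic operations (additions and multiplications).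
   Context: For a finite group $H$ with irreducible complex representations of dimensions $d_1,\dots,d_s$, $d^3(H)=d_1^3+\cdots+d_s^3$. For a finite group $G$, $\mathcal{R}(G)$ denotes a fixed complete set of pairwise inequivalent irreducible complex matrix representations of $G$. For a finite-dimensional $\mathbb{C}G$-module $M$ with ordered basis $\mathcal{B}$, $[g]_{\mathcal{B}}$ denotes the matrix of the action of $g$ with respect to $\mathcal{B}$; $\mathcal{B}$ is a symmetry adapted basis of $M$ with respect to $\mathcal{R}(G)$ if there is a fixed partition of the positions into consecutive blocks such that for every $g\in G$, $[g]_{\mathcal{B}}$ is block diagonal with respect to these blocks and each block equals $\rho(g)$ for some $\rho\in\mathcal{R}(G)$ depending only on the block. Standing setup: $G$ acts on a finite set $X$; $\mathbb{C}X$ is the space of functions $X\to\mathbb{C}$ with $(g\cdot f)(x)=f(g^{-1}x)$, each $x\in X$ is identified with its indicator function, and the standard basis of $\mathbb{C}X$ is $X$ itself; for a union $Y$ of orbits of a subgroup, $\mathbb{C}Y$ is regarded as a submodule of $\mathbb{C}X$. The sets $\mathcal{R}(G_1),\dots,\mathcal{R}(G_n)$ are compatible with respect to $\mathbb{C}X$ if some basis of $\mathbb{C}X$ is symmetry adapted with respect to $\mathcal{R}(G_i)$ (for $\mathbb{C}X$ restricted to $G_i$) for every $i$. For $1\le j\le n$, $\mathcal{B}_j$ is an orbital symmetry adapted basis with respect to $\mathcal{R}(G_1),\dots,\mathcal{R}(G_j)$: the disjoint union, over the $G_j$-orbits $Y\subseteq X$, of bases of $\mathbb{C}Y$ each symmetry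 adapted with respect to $\mathcal{R}(G_i)$ for every $i\le j$; $\mathcal{B}_1$ is the standard basis. For bases $\mathcal{B},\mathcal{B}'$, $[v]_{\mathcal{B}}$ is the coordinate vector and $C(\mathcal{B},\mathcal{B}')$ is the matrix with $C(\mathcal{B},\mathcal{B}')[v]_{\mathcal{B}'}=[v]_{\mathcal{B}}$. *)

theory Defs
  imports "HOL-Algebra.Coset" "Jordan_Normal_Form.Matrix"
begin

(* Functions X -> C with X = carrier G: represented as 'a => complex, zero outside carrier G.
   Left regular action: (g . f)(x) = f(g^-1 x). *)
definition reg_act :: "('a, 'b) monoid_scheme \<Rightarrow> 'a \<Rightarrow> ('a \<Rightarrow> complex) \<Rightarrow> ('a \<Rightarrow> complex)" where
  "reg_act G g f = (\<lambda>x. if x \<in> carrier G then f (monoid.mult G (inv\<^bsub>G\<^esub> g) x) else 0)"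

definition fun_space :: "'a set \<Rightarrow> ('a \<Rightarrow> complex) set" where
  "fun_space Y = {f. \<forall>x. x \<notin> Y \<longrightarrow> f x = 0}"

definition lincomb :: "complex vec \<Rightarrow> ('a \<Rightarrow> complex) list \<Rightarrow> ('a \<Rightarrow> complex)" where
  "lincomb c bs = (\<lambda>x. \<Sum>k<length bs. c $ k * (bs ! k) x)"

definition is_basis_of :: "'a set \<Rightarrow> ('a \<Rightarrow> complex) list \<Rightarrow> bool" where
  "is_basis_of Y bs \<longleftrightarrow> set bs \<subseteq> fun_space Y \<and>
     (\<forall>f \<in> fun_space Y. \<exists>!c. c \<in> carrier_vec (length bs) \<and> f = lincomb c bs)"

definition coords :: "('a \<Rightarrow> complex) list \<Rightarrow> ('a \<Rightarrow> complex) \<Rightarrow> complex vec" where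
  "coords bs f = (THE c. c \<in> carrier_vec (length bs) \<and> f = lincomb c bs)"

definition act_mat :: "('a, 'b) monoid_scheme \<Rightarrow> ('a \<Rightarrow> complex) list \<Rightarrow> 'a \<Rightarrow> complex mat" where
  "act_mat G bs g = mat (length bs) (length bs) (\<lambda>(i, k). coords bs (reg_act G g (bs ! k)) $ i)"

(* change of basis matrix C(B,B'):  C [v]_B' = [v]_B *)
definition change_mat :: "('a \<Rightarrow> complex) list \<Rightarrow> ('a \<Rightarrow> complex) list \<Rightarrow> complex mat" where
  "change_mat B B' = mat (length B) (length B') (\<lambda>(i, k). coords B (B' ! k) $ i)"

definition rep_dim :: "('a, 'b) monoid_scheme \<Rightarrow> ('a \<Rightarrow> complex mat) \<Rightarrow> nat" where
  "rep_dim G \<rho> = dim_row (\<rho> \<one>\<^bsub>G\<^esub>)"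

definition is_mat_rep :: "('a, 'b) monoid_scheme \<Rightarrow> 'a set \<Rightarrow> nat \<Rightarrow> ('a \<Rightarrow> complex mat) \<Rightarrow> bool" where
  "is_mat_rep G H d \<rho> \<longleftrightarrow> (\<forall>h \<in> H. \<rho> h \<in> carrier_mat d d) \<and>
     (\<forall>h1 \<in> H. \<forall>h2 \<in> H. \<rho> (monoid.mult G h1 h2) = \<rho> h1 * \<rho> h2) \<and> \<rho> \<one>\<^bsub>G\<^esub> = 1\<^sub>m d"

definition is_invariant_subspace :: "'a set \<Rightarrow> nat \<Rightarrow> ('a \<Rightarrow> complex mat) \<Rightarrow> complex vec set \<Rightarrow> bool" where
  "is_invariant_subspace H d \<rho> W \<longleftrightarrow> W \<subseteq> carrier_vec d \<and> 0\<^sub>v d \<in> W \<and>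
     (\<forall>v \<in> W. \<forall>w \<in> W. v + w \<in> W) \<and> (\<forall>a. \<forall>v \<in> W. a \<cdot>\<^sub>v v \<in> W) \<and>
     (\<forall>h \<in> H. \<forall>v \<in> W. \<rho> h *\<^sub>v v \<in> W)"

definition is_irrep :: "('a, 'b) monoid_scheme \<Rightarrow> 'a set \<Rightarrow> ('a \<Rightarrow> complex mat) \<Rightarrow> bool" where
  "is_irrep G H \<rho> \<longleftrightarrow> (let d = rep_dim G \<rho> in
     is_mat_rep G H d \<rho> \<and> 0 < d \<and>
     \<not> (\<exists>W. is_invariant_subspace H d \<rho> W \<and> W \<noteq> {0\<^sub>v d} \<and> W \<noteq> carrier_vec d))"

definition equiv_reps :: "('a, 'b) monoid_scheme \<Rightarrow> 'a set \<Rightarrow> ('a \<Rightarrow> complex mat) \<Rightarrow> ('a \<Rightarrow> complex mat) \<Rightarrow> bool" where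
  "equiv_reps G H \<rho> \<sigma> \<longleftrightarrow> rep_dim G \<rho> = rep_dim G \<sigma> \<and>
     (\<exists>P. P \<in> carrier_mat (rep_dim G \<rho>) (rep_dim G \<rho>) \<and> invertible_mat P \<and>
        (\<forall>h \<in> H. P * \<rho> h = \<sigma> h * P))"

definition complete_irreps :: "('a, 'b) monoid_scheme \<Rightarrow> 'a set \<Rightarrow> ('a \<Rightarrow> complex mat) set \<Rightarrow> bool" where
  "complete_irreps G H R \<longleftrightarrow> (\<forall>\<rho> \<in> R. is_irrep G H \<rho>) \<and>
     (\<forall>\<rho> \<in> R. \<forall>\<sigma> \<in> R. \<rho> \<noteq> \<sigma> \<longrightarrow> \<not> equiv_reps G H \<rho> \<sigma>) \<and>
     (\<forall>\<sigma>. is_irrep G H \<sigma> \<longrightarrow> (\<exists>\<rho> \<in> R. equiv_reps G H \<sigma> \<rho>))"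

definition d3 :: "('a, 'b) monoid_scheme \<Rightarrow> ('a \<Rightarrow> complex mat) set \<Rightarrow> nat" where
  "d3 G R = (\<Sum>\<rho> \<in> R. rep_dim G \<rho> ^ 3)"

fun block_diag :: "complex mat list \<Rightarrow> complex mat" where
  "block_diag [] = 0\<^sub>m 0 0"
| "block_diag (A # As) = four_block_mat A (0\<^sub>m (dim_row A) (dim_col (block_diag As)))
      (0\<^sub>m (dim_row (block_diag As)) (dim_col A)) (block_diag As)"

definition sym_adapted :: "('a, 'b) monoid_scheme \<Rightarrow> 'a set \<Rightarrow> ('a \<Rightarrow> complex mat) set
    \<Rightarrow> ('a \<Rightarrow> complex) list \<Rightarrow> bool" where
  "sym_adapted G H R bs \<longleftrightarrow> (\<exists>\<rho>s. set \<rho>s \<subseteq> R \<and>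
     (\<forall>h \<in> H. act_mat G bs h = block_diag (map (\<lambda>\<rho>. \<rho> h) \<rho>s)))"

(* orbital symmetry adapted basis w.r.t. R(G_1),...,R(G_j): concatenation, over the G_j-orbits Y
   (= right cosets G_j x under left multiplication), of bases of CY symmetry adapted w.r.t. all
   R(G_i), i <= j *)
definition orbital_sab :: "('a, 'b) monoid_scheme \<Rightarrow> (nat \<Rightarrow> 'a set) \<Rightarrow> (nat \<Rightarrow> ('a \<Rightarrow> complex mat) set)
    \<Rightarrow> nat \<Rightarrow> ('a \<Rightarrow> complex) list \<Rightarrow> bool" where
  "orbital_sab G Gs R j B \<longleftrightarrow> (\<exists>Ys Ls. distinct Ys \<and> set Ys = rcosets\<^bsub>G\<^esub> (Gs j) \<and>
     length Ls = length Ys \<and>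
     (\<forall>k < length Ys. is_basis_of (Ys ! k) (Ls ! k) \<and>
        (\<forall>i \<in> {1..j}. sym_adapted G (Gs i) (R i) (Ls ! k))) \<and>
     B = concat Ls)"

(* number of complex additions/multiplications to compute C*v using only nonzero entries of C:
   a row with k > 0 nonzero entries costs k multiplications and k-1 additions *)
definition sparse_matvec_ops :: "complex mat \<Rightarrow> nat" where
  "sparse_matvec_ops C = (\<Sum>i < dim_row C.
      let k = card {j. j < dim_col C \<and> C $$ (i, j) \<noteq> 0} in if k = 0 then 0 else 2 * k - 1)"

end

theory Submission
  imports Defs "Jordan_Normal_Form.Spectral_Radius"
begin

text \<open>Let \<open>H \<le> K\<close> be consecutive subgroups of the chain and \<open>q = [K : H]\<close>. The columns of the
  change of basis matrix are the coordinates, in the orbital basis for \<open>K\<close>, of the vectors of the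
  orbital basis for \<open>H\<close>. Such a vector lives on an \<open>H\<close>-orbit, which lies in a single \<open>K\<close>-orbit, so
  only the block of that \<open>K\<close>-orbit can be nonzero. Both bases are symmetry adapted for \<open>R(H)\<close>, so
  by Schur's lemma the coordinate matrix between a \<open>K\<close>-orbit and an \<open>H\<close>-orbit inside it vanishes
  between different irreducibles and is scalar between equal ones: the pair contributes at most
  \<open>\<Sum>\<rho>. m \<rho> * m' \<rho> * dim \<rho>\<close> nonzero entries, \<open>m\<close> and \<open>m'\<close> being the multiplicities.
  Evaluating at orbit representatives shows \<open>m' \<rho> \<le> dim \<rho>\<close> on an \<open>H\<close>-orbit and
  \<open>m \<rho> \<le> q * dim \<rho>\<close> on a \<open>K\<close>-orbit, which contains \<open>q\<close> orbits of \<open>H\<close>. Summing over the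
  \<open>[G : K]\<close> orbits of \<open>K\<close> bounds the number of nonzero entries by \<open>q\<^sup>2 * [G : K] * d\<^sup>3(H)\<close>, and a
  row with \<open>k\<close> of them costs \<open>2k - 1\<close> operations.\<close>

lemma lincomb_in_fun_space:
  assumes "set bs \<subseteq> fun_space Y"
  shows "lincomb c bs \<in> fun_space Y"
  using assms unfolding fun_space_def lincomb_def
  by (auto intro!: sum.neutral simp: subset_iff in_set_conv_nth)

lemma basis_in_fun_space: "is_basis_of Y bs \<Longrightarrow> i < length bs \<Longrightarrow> bs ! i \<in> fun_space Y"
  unfolding is_basis_of_def by auto

lemma fun_space_mono: "Y' \<subseteq> Y \<Longrightarrow> fun_space Y' \<subseteq> fun_space Y"
  unfolding fun_space_def by auto

lemma
  assumes "is_basis_of Y bs" and "f \<in> fun_space Y"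
  shows coords_carrier: "coords bs f \<in> carrier_vec (length bs)"
    and lincomb_coords: "lincomb (coords bs f) bs = f"
proof -
  from assms have "\<exists>!c. c \<in> carrier_vec (length bs) \<and> f = lincomb c bs"
    unfolding is_basis_of_def by auto
  then have "coords bs f \<in> carrier_vec (length bs) \<and> f = lincomb (coords bs f) bs"
    unfolding coords_def by (rule theI')
  then show "coords bs f \<in> carrier_vec (length bs)" "lincomb (coords bs f) bs = f" by auto
qed

lemma coords_eqI:
  assumes B: "is_basis_of Y bs" and c: "c \<in> carrier_vec (length bs)" and f: "lincomb c bs = f"
  shows "coords bs f = c"
proof -
  have "f \<in> fun_space Y"
    using f lincomb_in_fun_space B unfolding is_basis_of_def by blast
  with B have "\<exists>!c. c \<in> carrier_vec (length bs) \<and> f = lincomb c bs"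
    unfolding is_basis_of_def by auto
  then show ?thesis unfolding coords_def by (rule the1_equality) (use c f in auto)
qed

lemma coords_zero: "is_basis_of Y bs \<Longrightarrow> coords bs (\<lambda>x. 0) = 0\<^sub>v (length bs)"
  by (rule coords_eqI) (auto simp: lincomb_def)

lemma coords_basis_nth:
  assumes "is_basis_of Y bs" and "i < length bs"
  shows "coords bs (bs ! i) = unit_vec (length bs) i"
  by (rule coords_eqI[OF assms(1)])
    (use assms(2) in \<open>auto simp: lincomb_def unit_vec_def if_distrib[of "\<lambda>c. c * _"] cong: if_cong\<close>)

lemma coords_sum:
  assumes B: "is_basis_of Y bs" and I: "finite I" and f: "\<And>k. k \<in> I \<Longrightarrow> f k \<in> fun_space Y"
  shows "coords bs (\<lambda>x. \<Sum>k\<in>I. a k * f k x) =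
    vec (length bs) (\<lambda>i. \<Sum>k\<in>I. a k * coords bs (f k) $ i)"
proof (rule coords_eqI[OF B])
  have f_eq: "f k x = (\<Sum>i<length bs. coords bs (f k) $ i * (bs ! i) x)" if "k \<in> I" for k x
    using lincomb_coords[OF B f[OF that]] unfolding lincomb_def by metis
  show "lincomb (vec (length bs) (\<lambda>i. \<Sum>k\<in>I. a k * coords bs (f k) $ i)) bs =
      (\<lambda>x. \<Sum>k\<in>I. a k * f k x)"
  proof
    fix x
    have "(\<Sum>k\<in>I. a k * f k x) = (\<Sum>k\<in>I. \<Sum>i<length bs. a k * coords bs (f k) $ i * (bs ! i) x)"
      by (simp add: f_eq sum_distrib_left mult.assoc)
    also have "\<dots> = (\<Sum>i<length bs. \<Sum>k\<in>I. a k * coords bs (f k) $ i * (bs ! i) x)"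
      by (rule sum.swap)
    finally show "lincomb (vec (length bs) (\<lambda>i. \<Sum>k\<in>I. a k * coords bs (f k) $ i)) bs x =
        (\<Sum>k\<in>I. a k * f k x)"
      unfolding lincomb_def by (simp add: sum_distrib_right)
  qed
qed simp

lemma basis_sublist_independent:
  assumes B: "is_basis_of Y bs"
    and p: "inj_on p {..<m::nat}" "p ` {..<m} \<subseteq> {..<length bs}"
    and zero: "\<And>x. (\<Sum>u<m. c u * (bs ! p u) x) = 0"
    and u: "u < m"
  shows "c u = 0"
proof -
  have pu: "p u < length bs" using p(2) u by auto
  have "coords bs (\<lambda>x. \<Sum>u<m. c u * (bs ! p u) x) =
      vec (length bs) (\<lambda>i. \<Sum>u'<m. c u' * coords bs (bs ! p u') $ i)"
    by (rule coords_sum[where f = "\<lambda>u. bs ! p u" and a = c and I = "{..<m}", OF B finite_lessThan])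
      (use p(2) in \<open>auto intro: basis_in_fun_space[OF B]\<close>)
  moreover have "coords bs (\<lambda>x. \<Sum>u<m. c u * (bs ! p u) x) = 0\<^sub>v (length bs)"
    using coords_zero[OF B] zero by simp
  ultimately have vec_zero: "vec (length bs) (\<lambda>i. \<Sum>u'<m. c u' * coords bs (bs ! p u') $ i) =
      0\<^sub>v (length bs)" by simp
  have "(\<Sum>u'<m. c u' * coords bs (bs ! p u') $ p u) =
      vec (length bs) (\<lambda>i. \<Sum>u'<m. c u' * coords bs (bs ! p u') $ i) $ p u"
    using pu by simp
  also have "\<dots> = 0" unfolding vec_zero using pu by simp
  finally have "(\<Sum>u'<m. c u' * coords bs (bs ! p u') $ p u) = 0" .
  moreover have "c u' * coords bs (bs ! p u') $ p u = (if u' = u then c u else 0)" if "u' < m" for u'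
  proof -
    have "p u' < length bs" using p(2) that by auto
    moreover have "p u' = p u \<longleftrightarrow> u' = u" using inj_onD[OF p(1)] that u by auto
    ultimately show ?thesis using pu by (auto simp: coords_basis_nth[OF B])
  qed
  ultimately show ?thesis using u by simp
qed

lemma basis_length_pos:
  assumes B: "is_basis_of Y bs" and z: "z \<in> Y"
  shows "0 < length bs"
proof (rule ccontr)
  define \<delta> where "\<delta> = (\<lambda>x. if x = z then 1 else (0::complex))"
  assume "\<not> 0 < length bs"
  then have "lincomb (coords bs \<delta>) bs z = 0" unfolding lincomb_def by simp
  moreover have "\<delta> \<in> fun_space Y" using z unfolding \<delta>_def fun_space_def by auto
  ultimately have "\<delta> z = 0" using lincomb_coords[OF B] by metis
  then show False unfolding \<delta>_def by simp
qed

lemma change_mat_mult_coords: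
  assumes B: "is_basis_of Z B" and B': "is_basis_of Z B'" and f: "f \<in> fun_space Z"
  shows "change_mat B B' *\<^sub>v coords B' f = coords B f"
proof -
  define c where "c = coords B' f"
  have c: "c \<in> carrier_vec (length B')" unfolding c_def by (rule coords_carrier[OF B' f])
  have f_eq: "f = (\<lambda>x. \<Sum>k\<in>{..<length B'}. c $ k * (B' ! k) x)"
    using lincomb_coords[OF B' f] unfolding lincomb_def c_def by simp
  have "coords B f = vec (length B) (\<lambda>i. \<Sum>k\<in>{..<length B'}. c $ k * coords B (B' ! k) $ i)"
    by (subst f_eq, rule coords_sum[OF B]) (auto intro: basis_in_fun_space[OF B'])
  also have "\<dots> = change_mat B B' *\<^sub>v c"
    using c by (intro eq_vecI) (simp_all add: change_mat_def mult_mat_vec_def scalar_prod_def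
        mult.commute atLeast0LessThan)
  finally show ?thesis unfolding c_def by simp
qed

lemma change_mat_row_nonzero:
  assumes B: "is_basis_of Z B" and B': "is_basis_of Z B'" and i: "i < length B"
  shows "\<exists>j<length B'. change_mat B B' $$ (i, j) \<noteq> 0"
proof (rule ccontr)
  assume "\<not> (\<exists>j<length B'. change_mat B B' $$ (i, j) \<noteq> 0)"
  then have zero_row: "\<And>j. j < length B' \<Longrightarrow> coords B (B' ! j) $ i = 0"
    using i unfolding change_mat_def by auto
  have b: "B ! i \<in> fun_space Z" by (rule basis_in_fun_space[OF B i])
  have "coords B (B ! i) $ i = (change_mat B B' *\<^sub>v coords B' (B ! i)) $ i"
    by (simp add: change_mat_mult_coords[OF B B' b])
  also have "\<dots> = 0"
    using i coords_carrier[OF B' b] zero_row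
    by (simp add: change_mat_def mult_mat_vec_def scalar_prod_def)
  finally show False using coords_basis_nth[OF B i] i by simp
qed

lemma fold_change_mat_mult_coords:
  assumes Bs: "\<And>j. j \<in> {1..n} \<Longrightarrow> is_basis_of Z (B j)" and f: "f \<in> fun_space Z"
    and "1 \<le> m" "m \<le> n"
  shows "fold (\<lambda>j v. change_mat (B j) (B (j - 1)) *\<^sub>v v) [2..<Suc m] (coords (B 1) f) = coords (B m) f"
  using assms(3,4)
proof (induction m rule: dec_induct)
  case (step m)
  then have "[2..<Suc (Suc m)] = [2..<Suc m] @ [Suc m]" by simp
  with step change_mat_mult_coords[OF Bs Bs f, of "Suc m" m] show ?case by simp
qed simp

definition block_start :: "nat list \<Rightarrow> nat \<Rightarrow> nat" where
  "block_start ns t = sum_list (take t ns)"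

lemma block_start_0 [simp]: "block_start ns 0 = 0"
  unfolding block_start_def by simp

lemma block_start_Cons_Suc [simp]: "block_start (n # ns) (Suc t) = n + block_start ns t"
  unfolding block_start_def by simp

lemma sum_lessThan_sum_list_blocks:
  "(\<Sum>i<sum_list ns. g i) = (\<Sum>t<length ns. \<Sum>r<ns ! t. g (block_start ns t + r))"
proof (induction ns arbitrary: g)
  case (Cons n ns)
  have "sum g {n..<n + sum_list ns} = (\<Sum>i<sum_list ns. g (n + i))"
    by (rule sum.reindex_bij_witness[of _ "\<lambda>i. n + i" "\<lambda>i. i - n"]) auto
  then have "(\<Sum>i<n + sum_list ns. g i) = (\<Sum>i<n. g i) + (\<Sum>i<sum_list ns. g (n + i))"
    by (simp add: sum.atLeastLessThan_concat[of 0 n "n + sum_list ns", symmetric] lessThan_atLeast0)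
  with Cons.IH[of "\<lambda>i. g (n + i)"] show ?case
    unfolding length_Cons sum.lessThan_Suc_shift by (simp add: add.assoc)
qed simp

lemma block_start_add_less:
  "t < length ns \<Longrightarrow> r < ns ! t \<Longrightarrow> block_start ns t + r < sum_list ns"
proof (induction ns arbitrary: t)
  case (Cons n ns) then show ?case by (cases t) auto
qed simp

lemma block_start_add_inj:
  assumes "t < length ns" "r < ns ! t" "t' < length ns" "r' < ns ! t'"
    and "block_start ns t + r = block_start ns t' + r'"
  shows "t = t' \<and> r = r'"
  using assms
proof (induction ns arbitrary: t t')
  case (Cons n ns)
  then show ?case by (cases t; cases t') auto
qed simp

lemma block_start_decomp:
  "i < sum_list ns \<Longrightarrow> \<exists>t r. t < length ns \<and> r < ns ! t \<and> i = block_start ns t + r"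
proof (induction ns arbitrary: i)
  case (Cons n ns)
  show ?case
  proof (cases "i < n")
    case True then show ?thesis by (intro exI[of _ 0] exI[of _ i]) simp
  next
    case False
    with Cons.prems have "i - n < sum_list ns" by simp
    with Cons.IH obtain t r where "t < length ns" "r < ns ! t" "i - n = block_start ns t + r"
      by blast
    with False show ?thesis by (intro exI[of _ "Suc t"] exI[of _ r]) simp
  qed
qed simp

lemma nth_concat_block_start:
  "t < length Ls \<Longrightarrow> r < length (Ls ! t) \<Longrightarrow> concat Ls ! (block_start (map length Ls) t + r) = Ls ! t ! r"
proof (induction Ls arbitrary: t)
  case (Cons L Ls) then show ?case by (cases t) (auto simp: nth_append)
qed simp

lemma block_diag_dims [simp]:
  "dim_row (block_diag Ms) = sum_list (map dim_row Ms)"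
  "dim_col (block_diag Ms) = sum_list (map dim_col Ms)"
  by (induction Ms) auto

lemma block_diag_entry:
  assumes "\<forall>M\<in>set Ms. dim_col M = dim_row M"
    and "s < length Ms" "t < length Ms" "r < dim_row (Ms ! s)" "r' < dim_row (Ms ! t)"
  shows "block_diag Ms $$ (block_start (map dim_row Ms) s + r, block_start (map dim_row Ms) t + r') =
    (if s = t then Ms ! s $$ (r, r') else 0)"
  using assms
proof (induction Ms arbitrary: s t)
  case (Cons A As)
  then have "sum_list (map dim_col As) = sum_list (map dim_row As)"
    by (metis list.set_intros(2) map_eq_conv)
  moreover have "block_start (map dim_row As) a + k < sum_list (map dim_row As)"
    if "Suc a < length (A # As)" "k < dim_row ((A # As) ! Suc a)" for a k
    using block_start_add_less[of a "map dim_row As" k] that by simp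
  ultimately show ?case using Cons by (cases s; cases t) auto
qed simp

lemma mult_mat_vec_zero [simp]:
  "M \<in> carrier_mat b a \<Longrightarrow> M *\<^sub>v 0\<^sub>v a = (0\<^sub>v b :: 'a :: semiring_0 vec)"
  by (intro eq_vecI) (auto simp: mult_mat_vec_def)

lemma mult_mat_vec_pair_index:
  assumes l: "l < q" and i: "i < d" and c: "c \<in> carrier_vec m"
  shows "l * d + i < q * d"
    and "(mat (q * d) m (\<lambda>(a, u). f u (a mod d) (a div d)) *\<^sub>v c) $ (l * d + i) =
      (\<Sum>u<m. f u i l * c $ u)"
proof -
  have "l * d + i < (l + 1) * d" using i by simp
  also have "\<dots> \<le> q * d" using l by (intro mult_right_mono) auto
  finally show less: "l * d + i < q * d" .
  have "(l * d + i) div d = l" "(l * d + i) mod d = i"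
    using i by (simp_all add: add.commute[of "l * d"])
  then show "(mat (q * d) m (\<lambda>(a, u). f u (a mod d) (a div d)) *\<^sub>v c) $ (l * d + i) =
      (\<Sum>u<m. f u i l * c $ u)"
    using c less by (simp add: mult_mat_vec_def scalar_prod_def atLeast0LessThan)
qed

lemma nonzero_kernel_vec_exists:
  fixes A :: "'a :: field mat"
  assumes A: "A \<in> carrier_mat m k" and mk: "m < k"
  shows "\<exists>v. v \<in> carrier_vec k \<and> v \<noteq> 0\<^sub>v k \<and> A *\<^sub>v v = 0\<^sub>v m"
proof -
  \<comment> \<open>pad A with zero rows to a square matrix; its last row vanishes, so its determinant does\<close>
  define c where "c = (\<lambda>i. if i < m then row A i else 0\<^sub>v k)"
  define A' where "A' = mat\<^sub>r k k (\<lambda>i. if i = k - 1 then 0\<^sub>v k else c i)"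
  have "c \<in> {0..<k} \<rightarrow> carrier_vec k" using A unfolding c_def by auto
  then have "det A' = 0" unfolding A'_def by (intro det_row_0) (use mk in auto)
  then obtain v where v: "v \<in> carrier_vec k" "v \<noteq> 0\<^sub>v k" "A' *\<^sub>v v = 0\<^sub>v k"
    using det_0_iff_vec_prod_zero_field[of A' k] unfolding A'_def by auto
  have "row A i \<bullet> v = 0" if "i < m" for i
  proof -
    have "(A' *\<^sub>v v) $ i = 0" using v(3) that mk by simp
    moreover have "i \<noteq> k - 1" using that mk by simp
    ultimately show ?thesis using that mk A unfolding A'_def c_def by (simp add: row_mat_of_row_fun)
  qed
  then have "A *\<^sub>v v = 0\<^sub>v m" using A by (intro eq_vecI) auto
  with v show ?thesis by auto
qed

lemma mat_eq_zero_if_mult_vec_zero: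
  fixes M :: "'a :: field mat"
  assumes M: "M \<in> carrier_mat b a" and zero: "\<And>v. v \<in> carrier_vec a \<Longrightarrow> M *\<^sub>v v = 0\<^sub>v b"
  shows "M = 0\<^sub>m b a"
proof (rule eq_matI)
  fix i j assume i: "i < dim_row (0\<^sub>m b a)" and j: "j < dim_col (0\<^sub>m b a)"
  have "M *\<^sub>v unit_vec a j = col M j" using M j by (intro eq_vecI) (auto simp: mult_mat_vec_def)
  then have "col M j = 0\<^sub>v b" using zero[of "unit_vec a j"] by simp
  then show "M $$ (i, j) = 0\<^sub>m b a $$ (i, j)" using i j M by (metis carrier_matD(1) col_def index_vec
        index_zero_mat(1,2,3) index_zero_vec(1))
qed (use M in auto)

lemma cols_le_rows_if_kernel_trivial:
  fixes M :: "'a :: field mat"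
  assumes M: "M \<in> carrier_mat b a"
    and ker: "\<And>v. v \<in> carrier_vec a \<Longrightarrow> M *\<^sub>v v = 0\<^sub>v b \<Longrightarrow> v = 0\<^sub>v a"
  shows "a \<le> b"
  using nonzero_kernel_vec_exists[OF M] ker by (meson not_le)

lemma rows_le_cols_if_surjective:
  fixes M :: "'a :: field mat"
  assumes M: "M \<in> carrier_mat b a"
    and surj: "\<And>w. w \<in> carrier_vec b \<Longrightarrow> \<exists>v \<in> carrier_vec a. M *\<^sub>v v = w"
  shows "b \<le> a"
proof -
  \<comment> \<open>a right inverse U of M has trivial kernel\<close>
  obtain u where u: "\<And>j. j < b \<Longrightarrow> u j \<in> carrier_vec a \<and> M *\<^sub>v u j = unit_vec b j"
    using surj[OF unit_vec_carrier] by metis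
  define U where "U = mat a b (\<lambda>(i, j). u j $ i)"
  have U: "U \<in> carrier_mat a b" unfolding U_def by simp
  have col_U: "col U j = u j" if "j < b" for j
    using u[OF that] that unfolding U_def by (intro eq_vecI) auto
  have MU: "M * U = 1\<^sub>m b"
  proof (rule eq_matI)
    fix i j assume "i < dim_row (1\<^sub>m b)" "j < dim_col (1\<^sub>m b)"
    then have "(M * U) $$ (i, j) = (M *\<^sub>v col U j) $ i" using M U by simp
    then show "(M * U) $$ (i, j) = 1\<^sub>m b $$ (i, j)" using col_U u \<open>i < _\<close> \<open>j < _\<close> by simp
  qed (use M U in auto)
  show ?thesis
  proof (rule cols_le_rows_if_kernel_trivial[OF U])
    fix c assume c: "c \<in> carrier_vec b" "U *\<^sub>v c = 0\<^sub>v a"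
    have "c = (M * U) *\<^sub>v c" using MU c by simp
    also have "\<dots> = M *\<^sub>v (U *\<^sub>v c)" using M U c by (simp add: assoc_mult_mat_vec)
    finally show "c = 0\<^sub>v b" using c M by simp
  qed
qed

lemma invertible_mat_if_kernel_trivial:
  fixes M :: "'a :: field mat"
  assumes M: "M \<in> carrier_mat n n"
    and ker: "\<And>v. v \<in> carrier_vec n \<Longrightarrow> M *\<^sub>v v = 0\<^sub>v n \<Longrightarrow> v = 0\<^sub>v n"
  shows "invertible_mat M"
proof -
  have "det M \<noteq> 0" using det_0_iff_vec_prod_zero_field[OF M] ker by auto
  from det_non_zero_imp_unit[OF M this, of "()"]
  obtain B where "B \<in> carrier_mat n n" "B * M = 1\<^sub>m n" "M * B = 1\<^sub>m n"
    unfolding Units_def ring_mat_def by auto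
  then show ?thesis unfolding invertible_mat_def inverts_mat_def using M by auto
qed

section \<open>Schur's lemma\<close>

lemma is_irrepD:
  assumes "is_irrep G H \<rho>"
  shows "is_mat_rep G H (rep_dim G \<rho>) \<rho>" and "0 < rep_dim G \<rho>"
    and "is_invariant_subspace H (rep_dim G \<rho>) \<rho> W \<Longrightarrow>
      W = {0\<^sub>v (rep_dim G \<rho>)} \<or> W = carrier_vec (rep_dim G \<rho>)"
  using assms unfolding is_irrep_def Let_def by auto

lemma is_mat_rep_carrier: "is_mat_rep G H d \<rho> \<Longrightarrow> h \<in> H \<Longrightarrow> \<rho> h \<in> carrier_mat d d"
  unfolding is_mat_rep_def by auto

lemma kernel_invariant_subspace:
  assumes rho: "is_mat_rep G H a \<rho>" and sig: "is_mat_rep G H b \<sigma>"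
    and M: "M \<in> carrier_mat b a" and comm: "\<And>h. h \<in> H \<Longrightarrow> \<sigma> h * M = M * \<rho> h"
  shows "is_invariant_subspace H a \<rho> {v \<in> carrier_vec a. M *\<^sub>v v = 0\<^sub>v b}"
  unfolding is_invariant_subspace_def
proof (intro conjI ballI allI)
  fix h v assume h: "h \<in> H" and v: "v \<in> {v \<in> carrier_vec a. M *\<^sub>v v = 0\<^sub>v b}"
  have rh: "\<rho> h \<in> carrier_mat a a" and sh: "\<sigma> h \<in> carrier_mat b b"
    using is_mat_rep_carrier[OF rho h] is_mat_rep_carrier[OF sig h] by auto
  have "M *\<^sub>v (\<rho> h *\<^sub>v v) = (\<sigma> h * M) *\<^sub>v v" using M rh v by (simp add: comm[OF h])
  also have "\<dots> = \<sigma> h *\<^sub>v (M *\<^sub>v v)" using M sh v by simp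
  finally have "M *\<^sub>v (\<rho> h *\<^sub>v v) = \<sigma> h *\<^sub>v (M *\<^sub>v v)" .
  then show "\<rho> h *\<^sub>v v \<in> {v \<in> carrier_vec a. M *\<^sub>v v = 0\<^sub>v b}" using rh sh v by simp
qed (use M in \<open>auto simp: mult_add_distrib_mat_vec mult_mat_vec\<close>)

lemma image_invariant_subspace:
  assumes rho: "is_mat_rep G H a \<rho>" and sig: "is_mat_rep G H b \<sigma>"
    and M: "M \<in> carrier_mat b a" and comm: "\<And>h. h \<in> H \<Longrightarrow> \<sigma> h * M = M * \<rho> h"
  shows "is_invariant_subspace H b \<sigma> {M *\<^sub>v v | v. v \<in> carrier_vec a}"
  unfolding is_invariant_subspace_def
proof (intro conjI ballI allI)
  fix h w assume h: "h \<in> H" and "w \<in> {M *\<^sub>v v | v. v \<in> carrier_vec a}"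
  then obtain v where v: "v \<in> carrier_vec a" "w = M *\<^sub>v v" by auto
  have rh: "\<rho> h \<in> carrier_mat a a" and sh: "\<sigma> h \<in> carrier_mat b b"
    using is_mat_rep_carrier[OF rho h] is_mat_rep_carrier[OF sig h] by auto
  have "\<sigma> h *\<^sub>v w = (\<sigma> h * M) *\<^sub>v v" using M sh v by simp
  also have "\<dots> = M *\<^sub>v (\<rho> h *\<^sub>v v)" using M rh v by (simp add: comm[OF h])
  finally have "\<sigma> h *\<^sub>v w = M *\<^sub>v (\<rho> h *\<^sub>v v)" .
  then show "\<sigma> h *\<^sub>v w \<in> {M *\<^sub>v v | v. v \<in> carrier_vec a}" using rh v by auto
next
  show "0\<^sub>v b \<in> {M *\<^sub>v v | v. v \<in> carrier_vec a}"
    using M by (intro CollectI exI[of _ "0\<^sub>v a"]) auto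
next
  fix w w' assume "w \<in> {M *\<^sub>v v | v. v \<in> carrier_vec a}" "w' \<in> {M *\<^sub>v v | v. v \<in> carrier_vec a}"
  then obtain v v' where "v \<in> carrier_vec a" "v' \<in> carrier_vec a" "w = M *\<^sub>v v" "w' = M *\<^sub>v v'"
    by auto
  then show "w + w' \<in> {M *\<^sub>v v | v. v \<in> carrier_vec a}"
    using M by (auto intro!: exI[of _ "v + v'"] simp: mult_add_distrib_mat_vec)
next
  fix c :: complex and w assume "w \<in> {M *\<^sub>v v | v. v \<in> carrier_vec a}"
  then obtain v where "v \<in> carrier_vec a" "w = M *\<^sub>v v" by auto
  then show "c \<cdot>\<^sub>v w \<in> {M *\<^sub>v v | v. v \<in> carrier_vec a}"
    using M by (auto intro!: exI[of _ "c \<cdot>\<^sub>v v"] simp: mult_mat_vec)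
qed (use M in auto)

lemma irrep_intertwiner_equiv:
  assumes rho: "is_irrep G H \<rho>" and sig: "is_irrep G H \<sigma>"
    and M: "M \<in> carrier_mat (rep_dim G \<sigma>) (rep_dim G \<rho>)"
    and comm: "\<And>h. h \<in> H \<Longrightarrow> \<sigma> h * M = M * \<rho> h"
    and nz: "M \<noteq> 0\<^sub>m (rep_dim G \<sigma>) (rep_dim G \<rho>)"
  shows "equiv_reps G H \<rho> \<sigma>"
proof -
  define a b where "a = rep_dim G \<rho>" and "b = rep_dim G \<sigma>"
  note rf = is_irrepD[OF rho, folded a_def] and sf = is_irrepD[OF sig, folded b_def]
  note M = M[folded a_def b_def] and nz = nz[folded a_def b_def]
  have ker: "v = 0\<^sub>v a" if "v \<in> carrier_vec a" "M *\<^sub>v v = 0\<^sub>v b" for v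
    using rf(3)[OF kernel_invariant_subspace[OF rf(1) sf(1) M comm]] that nz
      mat_eq_zero_if_mult_vec_zero[OF M] by blast
  have "is_invariant_subspace H b \<sigma> {M *\<^sub>v v | v. v \<in> carrier_vec a}"
    by (rule image_invariant_subspace[OF rf(1) sf(1) M comm])
  moreover have "{M *\<^sub>v v | v. v \<in> carrier_vec a} \<noteq> {0\<^sub>v b}"
    using nz mat_eq_zero_if_mult_vec_zero[OF M] by blast
  ultimately have image: "carrier_vec b = {M *\<^sub>v v | v. v \<in> carrier_vec a}" using sf(3) by blast
  have surj: "\<exists>v \<in> carrier_vec a. M *\<^sub>v v = w" if "w \<in> carrier_vec b" for w
    using that unfolding image by blast
  have "a = b"
    using cols_le_rows_if_kernel_trivial[OF M ker] rows_le_cols_if_surjective[OF M surj] by simp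
  with M ker have "invertible_mat M" by (intro invertible_mat_if_kernel_trivial) auto
  with \<open>a = b\<close> M comm show ?thesis unfolding equiv_reps_def a_def b_def by auto
qed

lemma smult_one_mult_vec:
  assumes v: "v \<in> carrier_vec d"
  shows "(c \<cdot>\<^sub>m 1\<^sub>m d) *\<^sub>v v = c \<cdot>\<^sub>v (v :: 'a :: comm_ring_1 vec)"
proof (rule eq_vecI)
  fix i assume "i < dim_vec (c \<cdot>\<^sub>v v)"
  then have i: "i < d" using v by simp
  have "((c \<cdot>\<^sub>m 1\<^sub>m d) *\<^sub>v v) $ i = (\<Sum>j = 0..<d. c * (if j = i then 1 else 0) * v $ j)"
    using i v by (simp add: mult_mat_vec_def scalar_prod_def)
  also have "\<dots> = (\<Sum>j = 0..<d. if j = i then c * v $ j else 0)"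
    by (rule sum.cong) auto
  finally show "((c \<cdot>\<^sub>m 1\<^sub>m d) *\<^sub>v v) $ i = (c \<cdot>\<^sub>v v) $ i" using i v by simp
qed (use v in auto)

lemma irrep_intertwiner_scalar:
  assumes rho: "is_irrep G H \<rho>"
    and M: "M \<in> carrier_mat (rep_dim G \<rho>) (rep_dim G \<rho>)"
    and comm: "\<And>h. h \<in> H \<Longrightarrow> \<rho> h * M = M * \<rho> h"
  shows "\<exists>c. M = c \<cdot>\<^sub>m 1\<^sub>m (rep_dim G \<rho>)"
proof -
  define d where "d = rep_dim G \<rho>"
  note rf = is_irrepD[OF rho, folded d_def] and M = M[folded d_def]
  obtain c where "c \<in> spectrum M" using spectrum_non_empty[OF M rf(2)] by auto
  then obtain v where v: "v \<in> carrier_vec d" "v \<noteq> 0\<^sub>v d" "M *\<^sub>v v = c \<cdot>\<^sub>v v"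
    using M unfolding spectrum_def eigenvalue_def eigenvector_def by auto
  define N where "N = M - c \<cdot>\<^sub>m 1\<^sub>m d"
  have N: "N \<in> carrier_mat d d" unfolding N_def using M by (intro minus_carrier_mat) auto
  have "\<rho> h * N = N * \<rho> h" if h: "h \<in> H" for h
  proof -
    have rh: "\<rho> h \<in> carrier_mat d d" using is_mat_rep_carrier[OF rf(1) h] .
    then have "\<rho> h * (c \<cdot>\<^sub>m 1\<^sub>m d) = (c \<cdot>\<^sub>m 1\<^sub>m d) * \<rho> h"
      using mult_smult_distrib[OF rh one_carrier_mat] mult_smult_assoc_mat[OF one_carrier_mat rh]
      by simp
    then show ?thesis
      unfolding N_def using rh M comm[OF h] by (simp add: mult_minus_distrib_mat minus_mult_distrib_mat)
  qed
  then have "is_invariant_subspace H d \<rho> {v \<in> carrier_vec d. N *\<^sub>v v = 0\<^sub>v d}"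
    by (rule kernel_invariant_subspace[OF rf(1) rf(1) N])
  moreover have "N *\<^sub>v v = 0\<^sub>v d"
    unfolding N_def using M v smult_one_mult_vec[OF v(1)] by (simp add: minus_mult_distrib_mat_vec)
  ultimately have "{v \<in> carrier_vec d. N *\<^sub>v v = 0\<^sub>v d} = carrier_vec d"
    using rf(3) v by blast
  then have "N = 0\<^sub>m d d" by (intro mat_eq_zero_if_mult_vec_zero[OF N]) auto
  then have "M = c \<cdot>\<^sub>m 1\<^sub>m d"
  proof (intro eq_matI)
    fix i j assume N0: "N = 0\<^sub>m d d"
      and "i < dim_row (c \<cdot>\<^sub>m 1\<^sub>m d)" "j < dim_col (c \<cdot>\<^sub>m 1\<^sub>m d)"
    then have "N $$ (i, j) = 0" by simp
    with M \<open>i < _\<close> \<open>j < _\<close> show "M $$ (i, j) = (c \<cdot>\<^sub>m 1\<^sub>m d) $$ (i, j)"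
      unfolding N_def by simp
  qed (use M in auto)
  then show ?thesis unfolding d_def by auto
qed

lemma complete_irreps_intertwiner_entry:
  assumes R: "complete_irreps G H R" and \<rho>: "\<rho> \<in> R" and \<sigma>: "\<sigma> \<in> R"
    and M: "M \<in> carrier_mat (rep_dim G \<rho>) (rep_dim G \<sigma>)"
    and comm: "\<And>h. h \<in> H \<Longrightarrow> \<rho> h * M = M * \<sigma> h"
    and r: "r < rep_dim G \<rho>" and r': "r' < rep_dim G \<sigma>" and nz: "M $$ (r, r') \<noteq> 0"
  shows "\<rho> = \<sigma> \<and> r = r'"
proof -
  have irr: "is_irrep G H \<rho>" "is_irrep G H \<sigma>" using R \<rho> \<sigma> unfolding complete_irreps_def by auto
  show ?thesis
  proof (cases "\<rho> = \<sigma>")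
    case True
    then obtain c where "M = c \<cdot>\<^sub>m 1\<^sub>m (rep_dim G \<rho>)"
      using irrep_intertwiner_scalar[OF irr(1)] M comm by auto
    with True r r' nz show ?thesis by (cases "r = r'") auto
  next
    case False
    have "M \<noteq> 0\<^sub>m (rep_dim G \<rho>) (rep_dim G \<sigma>)" using nz r r' by auto
    then have "equiv_reps G H \<sigma> \<rho>" using irrep_intertwiner_equiv[OF irr(2,1) M comm] by simp
    moreover have "\<not> equiv_reps G H \<sigma> \<rho>" using R \<rho> \<sigma> False unfolding complete_irreps_def by auto
    ultimately show ?thesis by contradiction
  qed
qed

context group
begin

lemma reg_act_sum:
  "reg_act G h (\<lambda>x. \<Sum>k\<in>I. a k * f k x) = (\<lambda>x. \<Sum>k\<in>I. a k * reg_act G h (f k) x)"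
  unfolding reg_act_def by auto

lemma reg_act_inv_apply:
  "x \<in> carrier G \<Longrightarrow> h \<in> carrier G \<Longrightarrow> reg_act G (inv h) f x = f (h \<otimes> x)"
  unfolding reg_act_def by simp

lemma reg_act_fun_space:
  assumes h: "h \<in> carrier G" and Y: "h <# Y \<subseteq> Y" and f: "f \<in> fun_space Y"
  shows "reg_act G h f \<in> fun_space Y"
  unfolding fun_space_def reg_act_def
proof (intro CollectI allI impI)
  fix x assume "x \<notin> Y"
  have "inv h \<otimes> x \<notin> Y" if "x \<in> carrier G"
  proof
    assume "inv h \<otimes> x \<in> Y"
    then have "h \<otimes> (inv h \<otimes> x) \<in> Y" using Y unfolding l_coset_def by blast
    with h that \<open>x \<notin> Y\<close> show False by (simp add: m_assoc[symmetric])
  qed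
  with f show "(if x \<in> carrier G then f (inv h \<otimes> x) else 0) = 0" unfolding fun_space_def by auto
qed

lemma l_coset_r_coset_subset:
  assumes K: "subgroup K G" and h: "h \<in> K" and x: "x \<in> carrier G"
  shows "h <# (K #> x) \<subseteq> K #> x"
proof
  fix y assume "y \<in> h <# (K #> x)"
  then obtain k where k: "k \<in> K" "y = h \<otimes> (k \<otimes> x)" unfolding l_coset_def r_coset_def by auto
  then have "y = (h \<otimes> k) \<otimes> x" using K h x by (simp add: m_assoc subgroup.mem_carrier)
  then show "y \<in> K #> x" using K h k unfolding r_coset_def by (auto intro: subgroup.m_closed)
qed

lemma reg_act_basis_nth:
  assumes B: "is_basis_of Y bs" and h: "h \<in> carrier G" "h <# Y \<subseteq> Y" and k: "k < length bs"
  shows "reg_act G h (bs ! k) = (\<lambda>x. \<Sum>l<length bs. act_mat G bs h $$ (l, k) * (bs ! l) x)"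
  using lincomb_coords[OF B reg_act_fun_space[OF h basis_in_fun_space[OF B k]]] k
  unfolding lincomb_def act_mat_def by auto

lemma coords_reg_act:
  assumes B: "is_basis_of Y bs" and h: "h \<in> carrier G" "h <# Y \<subseteq> Y" and f: "f \<in> fun_space Y"
  shows "coords bs (reg_act G h f) = act_mat G bs h *\<^sub>v coords bs f"
proof -
  define c where "c = coords bs f"
  have c: "c \<in> carrier_vec (length bs)" unfolding c_def by (rule coords_carrier[OF B f])
  have "f = (\<lambda>x. \<Sum>k\<in>{..<length bs}. c $ k * (bs ! k) x)"
    using lincomb_coords[OF B f] unfolding lincomb_def c_def by simp
  then have "reg_act G h f = (\<lambda>x. \<Sum>k\<in>{..<length bs}. c $ k * reg_act G h (bs ! k) x)"
    by (simp add: reg_act_sum)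
  then have "coords bs (reg_act G h f) =
      vec (length bs) (\<lambda>i. \<Sum>k\<in>{..<length bs}. c $ k * coords bs (reg_act G h (bs ! k)) $ i)"
    by (simp only:) (rule coords_sum[OF B], auto intro: reg_act_fun_space[OF h] basis_in_fun_space[OF B])
  also have "\<dots> = act_mat G bs h *\<^sub>v c"
    using c by (intro eq_vecI) (simp_all add: act_mat_def mult_mat_vec_def scalar_prod_def
        mult.commute atLeast0LessThan)
  finally show ?thesis unfolding c_def .
qed

end

section \<open>Bases adapted to the irreducible representations of a subgroup\<close>

lemma sum_nth_eq_count_list:
  "(\<Sum>t<length xs. if xs ! t = x then c else 0) = count_list xs x * (c :: nat)"
proof (induction xs)
  case (Cons y xs)
  then show ?case unfolding length_Cons sum.lessThan_Suc_shift by simp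
qed simp

lemma sum_nested_delta:
  fixes f g :: "nat \<Rightarrow> nat \<Rightarrow> 'a :: semiring_0"
  assumes "s < n"
  shows "(\<Sum>t<n. \<Sum>r<d t. (if s = t then f t r else 0) * g t r) = (\<Sum>r<d s. f s r * g s r)"
    and "(\<Sum>t<n. \<Sum>r<d t. (if t = s then f t r else 0) * g t r) = (\<Sum>r<d s. f s r * g s r)"
proof -
  have "(\<Sum>t<n. \<Sum>r<d t. (if s = t then f t r else 0) * g t r) =
      (\<Sum>t<n. if s = t then \<Sum>r<d t. f t r * g t r else 0)"
    by (rule sum.cong) auto
  with assms show "(\<Sum>t<n. \<Sum>r<d t. (if s = t then f t r else 0) * g t r) = (\<Sum>r<d s. f s r * g s r)"
    by (simp add: sum.delta)
  then show "(\<Sum>t<n. \<Sum>r<d t. (if t = s then f t r else 0) * g t r) = (\<Sum>r<d s. f s r * g s r)"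
    by (simp add: eq_commute)
qed

locale subgroup_irreps = group G for G (structure) +
  fixes H :: "'a set" and R :: "('a \<Rightarrow> complex mat) set"
  assumes subgroup_H: "subgroup H G" and complete_R: "complete_irreps G H R"
begin

text \<open>The list \<open>\<rho>s\<close> names the representation in each diagonal block (the witness in
  \<open>sym_adapted\<close>); stability of \<open>Y\<close> under \<open>H\<close> makes \<open>\<complex>Y\<close> an \<open>H\<close>-module.\<close>

definition adapted_basis :: "'a set \<Rightarrow> ('a \<Rightarrow> complex) list \<Rightarrow> ('a \<Rightarrow> complex mat) list \<Rightarrow> bool" where
  "adapted_basis Y L \<rho>s \<longleftrightarrow> is_basis_of Y L \<and> set \<rho>s \<subseteq> R \<and>
     (\<forall>h\<in>H. h <# Y \<subseteq> Y \<and> act_mat G L h = block_diag (map (\<lambda>\<rho>. \<rho> h) \<rho>s))"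

abbreviation block_index :: "('a \<Rightarrow> complex mat) list \<Rightarrow> nat \<Rightarrow> nat \<Rightarrow> nat" where
  "block_index \<rho>s s r \<equiv> block_start (map (rep_dim G) \<rho>s) s + r"

lemma H_carrier: "h \<in> H \<Longrightarrow> h \<in> carrier G"
  using subgroup.mem_carrier[OF subgroup_H] .

lemma irrep_R: "\<rho> \<in> R \<Longrightarrow> is_irrep G H \<rho>"
  using complete_R unfolding complete_irreps_def by blast

lemma rep_R_carrier: "\<rho> \<in> R \<Longrightarrow> h \<in> H \<Longrightarrow> \<rho> h \<in> carrier_mat (rep_dim G \<rho>) (rep_dim G \<rho>)"
  using is_mat_rep_carrier[OF is_irrepD(1)[OF irrep_R]] .

lemma adapted_basisD:
  assumes "adapted_basis Y L \<rho>s"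
  shows "is_basis_of Y L" and "s < length \<rho>s \<Longrightarrow> \<rho>s ! s \<in> R"
    and "h \<in> H \<Longrightarrow> h <# Y \<subseteq> Y"
    and "h \<in> H \<Longrightarrow> act_mat G L h = block_diag (map (\<lambda>\<rho>. \<rho> h) \<rho>s)"
  using assms nth_mem unfolding adapted_basis_def by auto

lemma adapted_basis_length:
  assumes "adapted_basis Y L \<rho>s"
  shows "length L = sum_list (map (rep_dim G) \<rho>s)"
proof -
  have "length L = dim_row (act_mat G L \<one>)" unfolding act_mat_def by simp
  also have "\<dots> = sum_list (map (rep_dim G) \<rho>s)"
    using adapted_basisD(4)[OF assms subgroup.one_closed[OF subgroup_H]]
    by (simp add: rep_dim_def[abs_def] comp_def)
  finally show ?thesis .
qed

lemma block_index_less: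
  "adapted_basis Y L \<rho>s \<Longrightarrow> s < length \<rho>s \<Longrightarrow> r < rep_dim G (\<rho>s ! s) \<Longrightarrow> block_index \<rho>s s r < length L"
  using block_start_add_less[of s "map (rep_dim G) \<rho>s" r] by (simp add: adapted_basis_length)

lemma act_mat_block_entry:
  assumes L: "adapted_basis Y L \<rho>s" and h: "h \<in> H" and s: "s < length \<rho>s" and t: "t < length \<rho>s"
    and r: "r < rep_dim G (\<rho>s ! s)" and r': "r' < rep_dim G (\<rho>s ! t)"
  shows "act_mat G L h $$ (block_index \<rho>s s r, block_index \<rho>s t r') =
    (if s = t then (\<rho>s ! s) h $$ (r, r') else 0)"
proof -
  have dim_h: "dim_row ((\<rho>s ! i) h) = rep_dim G (\<rho>s ! i)" "dim_col ((\<rho>s ! i) h) = rep_dim G (\<rho>s ! i)"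
    if "i < length \<rho>s" for i
    using rep_R_carrier[OF adapted_basisD(2)[OF L that] h] by auto
  then have dims: "map dim_row (map (\<lambda>\<rho>. \<rho> h) \<rho>s) = map (rep_dim G) \<rho>s"
    "\<forall>M\<in>set (map (\<lambda>\<rho>. \<rho> h) \<rho>s). dim_col M = dim_row M"
    by (auto intro!: nth_equalityI simp: in_set_conv_nth)
  show ?thesis
    unfolding adapted_basisD(4)[OF L h] dims(1)[symmetric]
    using block_diag_entry[OF dims(2), of s t r r'] s t r r' dim_h by simp
qed

lemma sum_act_mat_row:
  assumes L: "adapted_basis Y L \<rho>s" and h: "h \<in> H" and s: "s < length \<rho>s"
    and r: "r < rep_dim G (\<rho>s ! s)"
  shows "(\<Sum>l<length L. act_mat G L h $$ (block_index \<rho>s s r, l) * g l) =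
    (\<Sum>i<rep_dim G (\<rho>s ! s). (\<rho>s ! s) h $$ (r, i) * g (block_index \<rho>s s i))"
  unfolding adapted_basis_length[OF L] sum_lessThan_sum_list_blocks
  using s r by (simp add: act_mat_block_entry[OF L h] sum_nested_delta)

lemma sum_act_mat_col:
  assumes L: "adapted_basis Y L \<rho>s" and h: "h \<in> H" and t: "t < length \<rho>s"
    and k: "k < rep_dim G (\<rho>s ! t)"
  shows "(\<Sum>l<length L. act_mat G L h $$ (l, block_index \<rho>s t k) * g l) =
    (\<Sum>i<rep_dim G (\<rho>s ! t). (\<rho>s ! t) h $$ (i, k) * g (block_index \<rho>s t i))"
  unfolding adapted_basis_length[OF L] sum_lessThan_sum_list_blocks
  using t k by (simp add: act_mat_block_entry[OF L h] sum_nested_delta)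

lemma reg_act_adapted_basis:
  assumes L: "adapted_basis Y L \<rho>s" and h: "h \<in> H" and t: "t < length \<rho>s"
    and k: "k < rep_dim G (\<rho>s ! t)"
  shows "reg_act G h (L ! block_index \<rho>s t k) =
    (\<lambda>x. \<Sum>i<rep_dim G (\<rho>s ! t). (\<rho>s ! t) h $$ (i, k) * (L ! block_index \<rho>s t i) x)"
  using reg_act_basis_nth[OF adapted_basisD(1)[OF L] H_carrier[OF h] adapted_basisD(3)[OF L h]
      block_index_less[OF L t k]]
  by (simp add: sum_act_mat_col[OF L h t k])

lemma coords_reg_act_block:
  assumes L: "adapted_basis Y L \<rho>s" and h: "h \<in> H" and f: "f \<in> fun_space Y"
    and s: "s < length \<rho>s" and r: "r < rep_dim G (\<rho>s ! s)"
  shows "coords L (reg_act G h f) $ block_index \<rho>s s r =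
    (\<Sum>i<rep_dim G (\<rho>s ! s). (\<rho>s ! s) h $$ (r, i) * coords L f $ block_index \<rho>s s i)"
proof -
  note B = adapted_basisD(1)[OF L]
  have "coords L (reg_act G h f) $ block_index \<rho>s s r =
      (act_mat G L h *\<^sub>v coords L f) $ block_index \<rho>s s r"
    by (simp add: coords_reg_act[OF B H_carrier[OF h] adapted_basisD(3)[OF L h] f])
  also have "\<dots> = (\<Sum>l<length L. act_mat G L h $$ (block_index \<rho>s s r, l) * coords L f $ l)"
    using block_index_less[OF L s r] coords_carrier[OF B f]
    by (simp add: mult_mat_vec_def scalar_prod_def act_mat_def atLeast0LessThan)
  finally show ?thesis by (simp add: sum_act_mat_row[OF L h s r])
qed

lemma coords_block_intertwiner:
  assumes L: "adapted_basis Y L \<rho>s" and s: "s < length \<rho>s" and h: "h \<in> H"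
    and F: "\<And>k. k < d \<Longrightarrow> F k \<in> fun_space Y" and \<sigma>: "\<sigma> h \<in> carrier_mat d d"
    and act: "\<And>k. k < d \<Longrightarrow> reg_act G h (F k) = (\<lambda>x. \<Sum>i<d. \<sigma> h $$ (i, k) * F i x)"
  defines "M \<equiv> mat (rep_dim G (\<rho>s ! s)) d (\<lambda>(r, k). coords L (F k) $ block_index \<rho>s s r)"
  shows "(\<rho>s ! s) h * M = M * \<sigma> h"
proof (rule eq_matI)
  note B = adapted_basisD(1)[OF L]
  fix r k assume "r < dim_row (M * \<sigma> h)" and "k < dim_col (M * \<sigma> h)"
  then have r: "r < rep_dim G (\<rho>s ! s)" and k: "k < d" using \<sigma> unfolding M_def by auto
  have "coords L (reg_act G h (F k)) =
      vec (length L) (\<lambda>j. \<Sum>i\<in>{..<d}. \<sigma> h $$ (i, k) * coords L (F i) $ j)"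
    unfolding act[OF k] by (rule coords_sum[OF B]) (auto intro: F)
  then have "coords L (reg_act G h (F k)) $ block_index \<rho>s s r = (M * \<sigma> h) $$ (r, k)"
    using block_index_less[OF L s r] r k \<sigma> unfolding M_def
    by (simp add: scalar_prod_def atLeast0LessThan mult.commute)
  moreover have "coords L (reg_act G h (F k)) $ block_index \<rho>s s r = ((\<rho>s ! s) h * M) $$ (r, k)"
    using r k rep_R_carrier[OF adapted_basisD(2)[OF L s] h] unfolding M_def
    by (simp add: coords_reg_act_block[OF L h F[OF k] s r] scalar_prod_def atLeast0LessThan)
  ultimately show "((\<rho>s ! s) h * M) $$ (r, k) = (M * \<sigma> h) $$ (r, k)" by simp
qed (use \<sigma> rep_R_carrier[OF adapted_basisD(2)[OF L s] h] in \<open>auto simp: M_def\<close>)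

lemma adapted_bases_coords_nonzero:
  assumes L: "adapted_basis Y L \<rho>s" and L': "adapted_basis Y' L' \<rho>s'" and Y': "Y' \<subseteq> Y"
    and s: "s < length \<rho>s" and t: "t < length \<rho>s'"
    and r: "r < rep_dim G (\<rho>s ! s)" and r': "r' < rep_dim G (\<rho>s' ! t)"
    and nz: "coords L (L' ! block_index \<rho>s' t r') $ block_index \<rho>s s r \<noteq> 0"
  shows "\<rho>s ! s = \<rho>s' ! t \<and> r = r'"
proof (rule complete_irreps_intertwiner_entry[OF complete_R adapted_basisD(2)[OF L s]
      adapted_basisD(2)[OF L' t] _ _ r r'])
  let ?M = "mat (rep_dim G (\<rho>s ! s)) (rep_dim G (\<rho>s' ! t))
    (\<lambda>(r, k). coords L (L' ! block_index \<rho>s' t k) $ block_index \<rho>s s r)"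
  show "?M \<in> carrier_mat (rep_dim G (\<rho>s ! s)) (rep_dim G (\<rho>s' ! t))" by simp
  show "?M $$ (r, r') \<noteq> 0" using nz r r' by simp
  fix h assume h: "h \<in> H"
  show "(\<rho>s ! s) h * ?M = ?M * (\<rho>s' ! t) h"
  proof (rule coords_block_intertwiner[OF L s h])
    fix k assume "k < rep_dim G (\<rho>s' ! t)"
    then show "L' ! block_index \<rho>s' t k \<in> fun_space Y"
      using fun_space_mono[OF Y'] basis_in_fun_space[OF adapted_basisD(1)[OF L']]
        block_index_less[OF L' t] by blast
  qed (use rep_R_carrier[OF adapted_basisD(2)[OF L' t] h] reg_act_adapted_basis[OF L' h t] in auto)
qed

lemma adapted_bases_coords_nonzero_count:
  assumes L: "adapted_basis Y L \<rho>s" and L': "adapted_basis Y' L' \<rho>s'" and Y': "Y' \<subseteq> Y"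
  shows "(\<Sum>i<length L. \<Sum>k<length L'. if coords L (L' ! k) $ i \<noteq> 0 then 1 else 0) \<le>
    (\<Sum>s<length \<rho>s. count_list \<rho>s' (\<rho>s ! s) * rep_dim G (\<rho>s ! s))"
proof -
  let ?N = "\<lambda>i k. if coords L (L' ! k) $ i \<noteq> 0 then 1 else (0::nat)"
  let ?d = "rep_dim G" and ?eq = "\<lambda>s t. \<rho>s' ! t = \<rho>s ! s"
  have pair: "(\<Sum>r<?d (\<rho>s ! s). \<Sum>r'<?d (\<rho>s' ! t). ?N (block_index \<rho>s s r) (block_index \<rho>s' t r'))
      \<le> (if ?eq s t then ?d (\<rho>s ! s) else 0)" if s: "s < length \<rho>s" and t: "t < length \<rho>s'" for s t
  proof -
    have "?N (block_index \<rho>s s r) (block_index \<rho>s' t r') \<le> (if ?eq s t \<and> r = r' then 1 else 0)"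
      if "r < ?d (\<rho>s ! s)" "r' < ?d (\<rho>s' ! t)" for r r'
      using adapted_bases_coords_nonzero[OF L L' Y' s t that] by auto
    then have "(\<Sum>r<?d (\<rho>s ! s). \<Sum>r'<?d (\<rho>s' ! t). ?N (block_index \<rho>s s r) (block_index \<rho>s' t r'))
        \<le> (\<Sum>r<?d (\<rho>s ! s). \<Sum>r'<?d (\<rho>s' ! t). if ?eq s t \<and> r = r' then 1 else 0)"
      by (intro sum_mono) simp
    also have "\<dots> = (if ?eq s t then ?d (\<rho>s ! s) else 0)"
      by (cases "?eq s t") (simp_all add: sum.delta')
    finally show ?thesis .
  qed
  have "(\<Sum>i<length L. \<Sum>k<length L'. ?N i k) =
      (\<Sum>s<length \<rho>s. \<Sum>r<?d (\<rho>s ! s). \<Sum>t<length \<rho>s'. \<Sum>r'<?d (\<rho>s' ! t).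
        ?N (block_index \<rho>s s r) (block_index \<rho>s' t r'))"
    unfolding adapted_basis_length[OF L] adapted_basis_length[OF L'] sum_lessThan_sum_list_blocks
    by simp
  also have "\<dots> = (\<Sum>s<length \<rho>s. \<Sum>t<length \<rho>s'. \<Sum>r<?d (\<rho>s ! s). \<Sum>r'<?d (\<rho>s' ! t).
        ?N (block_index \<rho>s s r) (block_index \<rho>s' t r'))"
    by (rule sum.cong[OF refl]) (rule sum.swap)
  also have "\<dots> \<le> (\<Sum>s<length \<rho>s. \<Sum>t<length \<rho>s'. if ?eq s t then ?d (\<rho>s ! s) else 0)"
    using pair by (intro sum_mono) simp
  also have "\<dots> = (\<Sum>s<length \<rho>s. count_list \<rho>s' (\<rho>s ! s) * ?d (\<rho>s ! s))"
    by (simp only: sum_nth_eq_count_list)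
  finally show ?thesis .
qed

text \<open>Combinations, with common coefficients, of copies \<open>ps u\<close> of the same irreducible block \<open>\<rho>\<close>
  transform under \<open>H\<close> like a single copy; hence if they vanish on \<open>X0\<close> they vanish on \<open>H X0\<close>.\<close>

lemma adapted_basis_copies_vanish:
  assumes L: "adapted_basis Y L \<rho>s"
    and ps: "\<And>u. u < m \<Longrightarrow> ps u < length \<rho>s \<and> \<rho>s ! ps u = \<rho>"
    and cover: "Y \<subseteq> (\<Union>x\<in>X0. H #> x)" and X0: "X0 \<subseteq> carrier G"
    and zero: "\<And>x i. x \<in> X0 \<Longrightarrow> i < rep_dim G \<rho> \<Longrightarrow>
      (\<Sum>u<m. c u * (L ! block_index \<rho>s (ps u) i) x) = 0"
    and k: "k < rep_dim G \<rho>"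
  shows "(\<Sum>u<m. c u * (L ! block_index \<rho>s (ps u) k) y) = 0"
proof (cases "y \<in> Y")
  case True
  with cover obtain h x where h: "h \<in> H" and x: "x \<in> X0" and y: "y = h \<otimes> x"
    unfolding r_coset_def by auto
  have ih: "inv h \<in> H" using subgroup.m_inv_closed[OF subgroup_H h] .
  have "(L ! block_index \<rho>s (ps u) k) y =
      (\<Sum>i<rep_dim G \<rho>. \<rho> (inv h) $$ (i, k) * (L ! block_index \<rho>s (ps u) i) x)" if "u < m" for u
    using reg_act_inv_apply[of x h "L ! block_index \<rho>s (ps u) k"] x X0 H_carrier[OF h] y
      reg_act_adapted_basis[OF L ih, of "ps u" k] ps[OF that] k by auto
  then have "(\<Sum>u<m. c u * (L ! block_index \<rho>s (ps u) k) y) =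
      (\<Sum>u<m. \<Sum>i<rep_dim G \<rho>. c u * (\<rho> (inv h) $$ (i, k) * (L ! block_index \<rho>s (ps u) i) x))"
    by (simp add: sum_distrib_left)
  also have "\<dots> = (\<Sum>i<rep_dim G \<rho>. \<rho> (inv h) $$ (i, k) * (\<Sum>u<m. c u * (L ! block_index \<rho>s (ps u) i) x))"
    by (subst sum.swap) (simp add: sum_distrib_left mult.left_commute)
  also have "\<dots> = 0" using zero[OF x] by simp
  finally show ?thesis .
next
  case False
  have "(L ! block_index \<rho>s (ps u) k) y = 0" if "u < m" for u
    using basis_in_fun_space[OF adapted_basisD(1)[OF L] block_index_less[OF L, of "ps u" k]]
      ps[OF that] k False unfolding fun_space_def by auto
  then show ?thesis by simp
qed

text \<open>By the previous lemma, evaluating \<open>m\<close> distinct copies of \<open>\<rho>\<close> at the points of \<open>X0\<close> is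
  injective on their common coefficients, which bounds \<open>m\<close> by \<open>|X0| \<cdot> dim \<rho>\<close>.\<close>

lemma adapted_basis_copies_le:
  assumes L: "adapted_basis Y L \<rho>s" and \<rho>: "\<rho> \<in> R"
    and ps: "\<And>u. u < m \<Longrightarrow> ps u < length \<rho>s \<and> \<rho>s ! ps u = \<rho>" and inj: "inj_on ps {..<m}"
    and X0: "finite X0" "X0 \<subseteq> carrier G" and cover: "Y \<subseteq> (\<Union>x\<in>X0. H #> x)"
  shows "m \<le> card X0 * rep_dim G \<rho>"
proof -
  define d where "d = rep_dim G \<rho>"
  obtain xs where xs: "set xs = X0" "distinct xs" using finite_distinct_list[OF X0(1)] by blast
  define q where "q = length xs"
  define W where "W = mat (q * d) m (\<lambda>(a, u). (L ! block_index \<rho>s (ps u) (a mod d)) (xs ! (a div d)))"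
  have d: "0 < d" unfolding d_def by (rule is_irrepD(2)[OF irrep_R[OF \<rho>]])
  have "c = 0\<^sub>v m" if c: "c \<in> carrier_vec m" "W *\<^sub>v c = 0\<^sub>v (q * d)" for c
  proof -
    have zero_X0: "(\<Sum>u<m. c $ u * (L ! block_index \<rho>s (ps u) i) x) = 0"
      if x: "x \<in> X0" and i: "i < d" for x i
    proof -
      obtain l where l: "l < q" "xs ! l = x"
        using x xs(1) in_set_conv_nth[of x xs] unfolding q_def by auto
      then show ?thesis
        using mult_mat_vec_pair_index(2)[where f = "\<lambda>u i l. (L ! block_index \<rho>s (ps u) i) (xs ! l)",
            OF l(1) i c(1)] mult_mat_vec_pair_index(1)[OF l(1) i c(1)] c(2)
        unfolding W_def by (simp add: mult.commute)
    qed
    have zero: "(\<Sum>u<m. c $ u * (L ! block_index \<rho>s (ps u) 0) x) = 0" for x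
      using adapted_basis_copies_vanish[OF L ps cover X0(2) zero_X0[unfolded d_def] d[unfolded d_def]]
      by simp
    have "inj_on (\<lambda>u. block_index \<rho>s (ps u) 0) {..<m}"
    proof (rule inj_onI)
      fix u u' assume u: "u \<in> {..<m}" "u' \<in> {..<m}"
        and eq: "block_index \<rho>s (ps u) 0 = block_index \<rho>s (ps u') 0"
      have "ps u = ps u'" using block_start_add_inj[OF _ _ _ _ eq] ps u d unfolding d_def by auto
      then show "u = u'" using inj_onD[OF inj _ u] by simp
    qed
    moreover have "(\<lambda>u. block_index \<rho>s (ps u) 0) ` {..<m} \<subseteq> {..<length L}"
      using block_index_less[OF L, of _ 0] ps d unfolding d_def by auto
    ultimately have "c $ u = 0" if "u < m" for u
      using basis_sublist_independent[OF adapted_basisD(1)[OF L] _ _ zero that] by blast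
    with c(1) show ?thesis by (intro eq_vecI) auto
  qed
  then have "m \<le> q * d" by (intro cols_le_rows_if_kernel_trivial[of W]) (simp_all add: W_def)
  moreover have "card X0 = q" using distinct_card[OF xs(2)] xs(1) unfolding q_def by simp
  ultimately show ?thesis unfolding d_def by simp
qed

lemma adapted_basis_multiplicity:
  assumes L: "adapted_basis Y L \<rho>s" and \<rho>: "\<rho> \<in> R"
    and X0: "finite X0" "X0 \<subseteq> carrier G" and cover: "Y \<subseteq> (\<Union>x\<in>X0. H #> x)"
  shows "count_list \<rho>s \<rho> \<le> card X0 * rep_dim G \<rho>"
proof -
  define S where "S = {s. s < length \<rho>s \<and> \<rho> = \<rho>s ! s}"
  define sl where "sl = sorted_list_of_set S"
  have "finite S" unfolding S_def by simp
  then have sl: "distinct sl" "set sl = S" and count: "count_list \<rho>s \<rho> = length sl"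
    unfolding sl_def S_def by (simp_all add: count_list_eq_length_filter length_filter_conv_card)
  have "sl ! u < length \<rho>s \<and> \<rho>s ! (sl ! u) = \<rho>" if "u < length sl" for u
    using nth_mem[OF that] sl(2) unfolding S_def by auto
  moreover have "inj_on ((!) sl) {..<length sl}"
    using sl(1) by (auto simp: inj_on_def nth_eq_iff_index_eq)
  ultimately have "length sl \<le> card X0 * rep_dim G \<rho>"
    by (rule adapted_basis_copies_le[OF L \<rho> _ _ X0 cover])
  then show ?thesis using count by simp
qed

lemma rep_R_mult: "\<rho> \<in> R \<Longrightarrow> h \<in> H \<Longrightarrow> h' \<in> H \<Longrightarrow> \<rho> (h \<otimes> h') = \<rho> h * \<rho> h'"
  using is_irrepD(1)[OF irrep_R] unfolding is_mat_rep_def by blast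

definition matrix_coeff :: "('a \<Rightarrow> complex mat) \<Rightarrow> nat \<Rightarrow> 'a \<Rightarrow> complex" where
  "matrix_coeff \<rho> k y = (if y \<in> H then \<rho> (inv y) $$ (0, k) else 0)"

lemma reg_act_matrix_coeff:
  assumes \<rho>: "\<rho> \<in> R" and h: "h \<in> H" and k: "k < rep_dim G \<rho>"
  shows "reg_act G h (matrix_coeff \<rho> k) = (\<lambda>y. \<Sum>i<rep_dim G \<rho>. \<rho> h $$ (i, k) * matrix_coeff \<rho> i y)"
proof
  fix y
  have hc: "h \<in> carrier G" and ih: "inv h \<in> H"
    using H_carrier[OF h] subgroup.m_inv_closed[OF subgroup_H h] by auto
  show "reg_act G h (matrix_coeff \<rho> k) y = (\<Sum>i<rep_dim G \<rho>. \<rho> h $$ (i, k) * matrix_coeff \<rho> i y)"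
  proof (cases "y \<in> H")
    case True
    have yc: "y \<in> carrier G" and iy: "inv y \<in> H"
      using H_carrier[OF True] subgroup.m_inv_closed[OF subgroup_H True] by auto
    have "inv (inv h \<otimes> y) = inv y \<otimes> h" using hc yc by (simp add: inv_mult_group)
    then have "reg_act G h (matrix_coeff \<rho> k) y = (\<rho> (inv y) * \<rho> h) $$ (0, k)"
      unfolding reg_act_def matrix_coeff_def
      using yc subgroup.m_closed[OF subgroup_H ih True] rep_R_mult[OF \<rho> iy h] by simp
    also have "\<dots> = (\<Sum>i<rep_dim G \<rho>. \<rho> (inv y) $$ (0, i) * \<rho> h $$ (i, k))"
      using rep_R_carrier[OF \<rho> iy] rep_R_carrier[OF \<rho> h] k is_irrepD(2)[OF irrep_R[OF \<rho>]]
      by (simp add: scalar_prod_def atLeast0LessThan)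
    finally show ?thesis unfolding matrix_coeff_def using True by (simp add: mult.commute)
  next
    case False
    have "inv h \<otimes> y \<notin> H" if "y \<in> carrier G"
    proof
      assume "inv h \<otimes> y \<in> H"
      then have "h \<otimes> (inv h \<otimes> y) \<in> H" by (rule subgroup.m_closed[OF subgroup_H h])
      with hc that False show False by (simp add: m_assoc[symmetric])
    qed
    with False show ?thesis unfolding reg_act_def matrix_coeff_def by auto
  qed
qed

text \<open>Every irreducible occurs in \<open>\<complex>H\<close>: the matrix coefficients of \<open>\<rho>\<close> span a copy of it.\<close>

lemma irrep_in_adapted_basis:
  assumes L: "adapted_basis H L \<rho>s" and \<rho>: "\<rho> \<in> R"
  shows "\<rho> \<in> set \<rho>s"
proof -
  define d where "d = rep_dim G \<rho>"
  note B = adapted_basisD(1)[OF L]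
  have d: "0 < d" unfolding d_def by (rule is_irrepD(2)[OF irrep_R[OF \<rho>]])
  have \<phi>: "matrix_coeff \<rho> k \<in> fun_space H" for k unfolding matrix_coeff_def fun_space_def by auto
  have "matrix_coeff \<rho> 0 \<one> = 1"
    using is_irrepD(1)[OF irrep_R[OF \<rho>]] subgroup.one_closed[OF subgroup_H] d
    unfolding matrix_coeff_def is_mat_rep_def d_def by simp
  moreover have "lincomb (0\<^sub>v (length L)) L \<one> = 0" unfolding lincomb_def by simp
  ultimately have "coords L (matrix_coeff \<rho> 0) \<noteq> 0\<^sub>v (length L)"
    using lincomb_coords[OF B \<phi>, of 0] by (metis zero_neq_one)
  then obtain j where j: "j < length L" "coords L (matrix_coeff \<rho> 0) $ j \<noteq> 0"
    using coords_carrier[OF B \<phi>] by (metis carrier_vecD eq_vecI index_zero_vec)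
  then obtain s r where s: "s < length \<rho>s" and r: "r < rep_dim G (\<rho>s ! s)" and j_eq: "j = block_index \<rho>s s r"
    using block_start_decomp[of j "map (rep_dim G) \<rho>s"] adapted_basis_length[OF L] by auto
  define M where "M = mat (rep_dim G (\<rho>s ! s)) d (\<lambda>(r, k). coords L (matrix_coeff \<rho> k) $ block_index \<rho>s s r)"
  have "\<rho>s ! s = \<rho>"
  proof (rule conjunct1[OF complete_irreps_intertwiner_entry[OF complete_R adapted_basisD(2)[OF L s] \<rho>,
          of M r 0]])
    show "M \<in> carrier_mat (rep_dim G (\<rho>s ! s)) (rep_dim G \<rho>)" unfolding M_def d_def by simp
    show "\<And>h. h \<in> H \<Longrightarrow> (\<rho>s ! s) h * M = M * \<rho> h"
      unfolding M_def d_def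
      by (rule coords_block_intertwiner[OF L s]) (auto simp: \<phi> rep_R_carrier[OF \<rho>] reg_act_matrix_coeff[OF \<rho>])
    show "M $$ (r, 0) \<noteq> 0" using j j_eq r d unfolding M_def by simp
  qed (use r d d_def in auto)
  then show ?thesis using s by auto
qed

end

context group
begin

lemma rcoset_subset_rcoset:
  assumes H: "subgroup H G" and K: "subgroup K G" and HK: "H \<subseteq> K"
    and Y': "Y' \<in> rcosets H" and Y: "Y \<in> rcosets K" and meet: "Y' \<inter> Y \<noteq> {}"
  shows "Y' \<subseteq> Y"
proof -
  obtain x y where x: "x \<in> carrier G" "Y' = H #> x" and y: "y \<in> carrier G" "Y = K #> y"
    using Y' Y unfolding RCOSETS_def by auto
  obtain z where z: "z \<in> Y'" "z \<in> Y" using meet by blast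
  have "Y' = H #> z" "Y = K #> z" using repr_independence z x y H K by auto
  with HK show ?thesis unfolding r_coset_def by auto
qed

lemma rcoset_in_rcoset:
  assumes H: "subgroup H G" and K: "subgroup K G" and HK: "H \<subseteq> K"
    and Y: "Y \<in> rcosets K" and y: "y \<in> Y"
  shows "H #> y \<in> {Y' \<in> rcosets H. Y' \<subseteq> Y}"
proof -
  have yc: "y \<in> carrier G" using rcosets_part_G[OF K] Y y by blast
  have "H #> y \<in> rcosets H" using rcosetsI[OF subgroup.subset[OF H] yc] .
  moreover have "y \<in> H #> y" using rcos_self[OF yc H] .
  ultimately show ?thesis using rcoset_subset_rcoset[OF H K HK _ Y] y by blast
qed

lemma card_rcosets_in_rcoset:
  assumes fin: "finite (carrier G)" and H: "subgroup H G" and K: "subgroup K G" and HK: "H \<subseteq> K"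
    and Y: "Y \<in> rcosets K"
  shows "card {Y' \<in> rcosets H. Y' \<subseteq> Y} * card H = card K"
proof -
  let ?C = "{Y' \<in> rcosets H. Y' \<subseteq> Y}"
  have union: "\<Union>?C = Y"
  proof
    show "Y \<subseteq> \<Union>?C"
    proof
      fix y assume y: "y \<in> Y"
      then have "y \<in> carrier G" using rcosets_part_G[OF K] Y by blast
      then have "y \<in> H #> y" by (rule rcos_self[OF _ H])
      with rcoset_in_rcoset[OF H K HK Y y] show "y \<in> \<Union>?C" by blast
    qed
  qed blast
  have finC: "finite ?C"
    by (rule finite_subset[of _ "Pow (carrier G)"]) (use rcosets_subset_PowG[OF H] fin in auto)
  have "card H * card ?C = card (\<Union>?C)"
  proof (rule card_partition[OF finC])
    show "finite (\<Union>?C)"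
      unfolding union by (rule finite_subset[OF _ fin]) (use Y rcosets_part_G[OF K] in blast)
    show "card c = card H" if "c \<in> ?C" for c
      using that card_rcosets_equal[OF _ subgroup.subset[OF H]] by auto
    show "c1 \<inter> c2 = {}" if "c1 \<in> ?C" "c2 \<in> ?C" "c1 \<noteq> c2" for c1 c2
      using that rcos_disjoint[OF H] unfolding pairwise_def disjnt_def by blast
  qed
  also have "\<dots> = card K" unfolding union using card_rcosets_equal[OF Y subgroup.subset[OF K]] by simp
  finally show ?thesis by (simp add: mult.commute)
qed

lemma card_subgroup_pos:
  assumes "finite (carrier G)" and "subgroup H G"
  shows "0 < card H"
proof -
  have "finite H" using finite_subset[OF subgroup.subset assms(1)] assms(2) by blast
  moreover have "H \<noteq> {}" using subgroup.one_closed[OF assms(2)] by blast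
  ultimately show ?thesis by (simp add: card_gt_0_iff)
qed

lemma rcoset_covered_by_rcosets:
  assumes fin: "finite (carrier G)" and H: "subgroup H G" and K: "subgroup K G" and HK: "H \<subseteq> K"
    and Y: "Y \<in> rcosets K"
  obtains X0 where "finite X0" "X0 \<subseteq> carrier G" "card X0 \<le> card K div card H"
    "Y \<subseteq> (\<Union>x\<in>X0. H #> x)"
proof -
  let ?C = "{Y' \<in> rcosets H. Y' \<subseteq> Y}"
  define rep where "rep Y' = (SOME x. x \<in> carrier G \<and> Y' = H #> x)" for Y'
  have rep: "rep Y' \<in> carrier G \<and> Y' = H #> rep Y'" if "Y' \<in> rcosets H" for Y'
  proof -
    have "\<exists>x. x \<in> carrier G \<and> Y' = H #> x" using that unfolding RCOSETS_def by auto
    then show ?thesis unfolding rep_def by (rule someI_ex)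
  qed
  have finC: "finite ?C"
    by (rule finite_subset[of _ "Pow (carrier G)"]) (use rcosets_subset_PowG[OF H] fin in auto)
  show ?thesis
  proof (rule that[of "rep ` ?C"])
    show "finite (rep ` ?C)" using finC by simp
    show "rep ` ?C \<subseteq> carrier G" using rep by auto
    have "card ?C = card K div card H"
      using card_rcosets_in_rcoset[OF fin H K HK Y] card_subgroup_pos[OF fin H]
      by (metis nonzero_mult_div_cancel_right not_gr0)
    then show "card (rep ` ?C) \<le> card K div card H" using card_image_le[OF finC, of rep] by simp
    show "Y \<subseteq> (\<Union>x\<in>rep ` ?C. H #> x)"
    proof
      fix y assume y: "y \<in> Y"
      then have "y \<in> carrier G" using rcosets_part_G[OF K] Y by blast
      then have "y \<in> H #> y" by (rule rcos_self[OF _ H])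
      with rcoset_in_rcoset[OF H K HK Y y] rep[of "H #> y"] show "y \<in> (\<Union>x\<in>rep ` ?C. H #> x)" by auto
    qed
  qed
qed

end

definition restrict_fun :: "'a set \<Rightarrow> ('a \<Rightarrow> complex) \<Rightarrow> 'a \<Rightarrow> complex" where
  "restrict_fun Y f = (\<lambda>x. if x \<in> Y then f x else 0)"

lemma lincomb_concat:
  "lincomb c (concat Ls) x =
    (\<Sum>p<length Ls. \<Sum>r<length (Ls ! p). c $ (block_start (map length Ls) p + r) * (Ls ! p ! r) x)"
proof -
  have "lincomb c (concat Ls) x = (\<Sum>i<sum_list (map length Ls). c $ i * (concat Ls ! i) x)"
    unfolding lincomb_def by (simp add: length_concat)
  also have "\<dots> = (\<Sum>p<length Ls. \<Sum>r<length (Ls ! p).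
      c $ (block_start (map length Ls) p + r) * (concat Ls ! (block_start (map length Ls) p + r)) x)"
    by (simp add: sum_lessThan_sum_list_blocks)
  finally show ?thesis by (simp add: nth_concat_block_start)
qed

locale partition_bases =
  fixes Ys :: "'a set list" and Ls :: "('a \<Rightarrow> complex) list list" and Z :: "'a set"
  assumes length_Ls: "length Ls = length Ys"
    and bases: "\<And>p. p < length Ys \<Longrightarrow> is_basis_of (Ys ! p) (Ls ! p)"
    and disjoint: "\<And>p p'. p < length Ys \<Longrightarrow> p' < length Ys \<Longrightarrow> p \<noteq> p' \<Longrightarrow> Ys ! p \<inter> Ys ! p' = {}"
    and union: "\<Union>(set Ys) = Z"
begin

abbreviation concat_index :: "nat \<Rightarrow> nat \<Rightarrow> nat" where
  "concat_index p r \<equiv> block_start (map length Ls) p + r"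

lemma basis_vanishes_outside:
  "p < length Ys \<Longrightarrow> r < length (Ls ! p) \<Longrightarrow> x \<notin> Ys ! p \<Longrightarrow> (Ls ! p ! r) x = 0"
  using basis_in_fun_space[OF bases] unfolding fun_space_def by blast

lemma restrict_lincomb_concat:
  assumes p: "p < length Ys"
  shows "restrict_fun (Ys ! p) (lincomb c (concat Ls)) =
    lincomb (vec (length (Ls ! p)) (\<lambda>r. c $ concat_index p r)) (Ls ! p)"
proof
  fix x
  have "lincomb c (concat Ls) x = (\<Sum>p'<length Ls. if p' = p then
      \<Sum>r<length (Ls ! p). c $ concat_index p r * (Ls ! p ! r) x else 0)" if x: "x \<in> Ys ! p"
  proof -
    have "x \<notin> Ys ! p'" if "p' < length Ys" "p' \<noteq> p" for p'
      using x disjoint[OF p that(1)] that(2) by auto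
    then show ?thesis
      unfolding lincomb_concat using length_Ls by (intro sum.cong) (auto simp: basis_vanishes_outside)
  qed
  then show "restrict_fun (Ys ! p) (lincomb c (concat Ls)) x =
      lincomb (vec (length (Ls ! p)) (\<lambda>r. c $ concat_index p r)) (Ls ! p) x"
    using p length_Ls basis_vanishes_outside[OF p]
    unfolding restrict_fun_def by (auto simp: lincomb_def)
qed

lemma coords_restrict_lincomb_concat:
  assumes p: "p < length Ys" and r: "r < length (Ls ! p)"
  shows "coords (Ls ! p) (restrict_fun (Ys ! p) (lincomb c (concat Ls))) $ r = c $ concat_index p r"
  using coords_eqI[OF bases[OF p] _ restrict_lincomb_concat[OF p, symmetric]] r by simp

lemma sum_restrict_fun:
  assumes f: "f \<in> fun_space Z"
  shows "(\<Sum>p<length Ys. restrict_fun (Ys ! p) f x) = f x"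
proof (cases "x \<in> Z")
  case True
  then obtain p where p: "p < length Ys" "x \<in> Ys ! p" using union by (auto simp: in_set_conv_nth)
  then have "restrict_fun (Ys ! p') f x = (if p' = p then f x else 0)" if "p' < length Ys" for p'
    using disjoint[OF p(1) that] unfolding restrict_fun_def by auto
  then show ?thesis using p(1) by simp
next
  case False
  then show ?thesis using f unfolding restrict_fun_def fun_space_def by auto
qed

lemma lincomb_concat_exists:
  assumes f: "f \<in> fun_space Z"
  shows "\<exists>c \<in> carrier_vec (length (concat Ls)). lincomb c (concat Ls) = f"
proof -
  let ?coords = "\<lambda>p. coords (Ls ! p) (restrict_fun (Ys ! p) f)"
  have restrict: "restrict_fun (Ys ! p) f \<in> fun_space (Ys ! p)" for p
    unfolding restrict_fun_def fun_space_def by simp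
  have dim: "dim_vec (?coords p) = length (Ls ! p)" if "p < length Ys" for p
    using coords_carrier[OF bases[OF that] restrict] by simp
  define cs where "cs = map (\<lambda>p. list_of_vec (?coords p)) [0..<length Ys]"
  define c where "c = vec_of_list (concat cs)"
  have lengths: "map length cs = map length Ls"
    unfolding cs_def by (rule nth_equalityI) (simp_all add: dim length_Ls)
  have c: "c \<in> carrier_vec (length (concat Ls))"
    unfolding c_def carrier_vec_def by (simp add: length_concat lengths)
  have c_nth: "c $ concat_index p r = ?coords p $ r" if p: "p < length Ys" and r: "r < length (Ls ! p)" for p r
  proof -
    have "c $ concat_index p r = concat cs ! (block_start (map length cs) p + r)"
      unfolding c_def lengths by (simp add: vec_of_list_index)
    also have "\<dots> = cs ! p ! r" using p r dim[OF p] by (intro nth_concat_block_start) (simp_all add: cs_def)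
    finally show ?thesis using p r dim[OF p] by (simp add: cs_def)
  qed
  have "lincomb c (concat Ls) x = f x" for x
  proof -
    have "lincomb c (concat Ls) x = (\<Sum>p<length Ys. lincomb (?coords p) (Ls ! p) x)"
      unfolding lincomb_concat length_Ls by (intro sum.cong) (simp_all add: c_nth lincomb_def)
    also have "\<dots> = (\<Sum>p<length Ys. restrict_fun (Ys ! p) f x)"
      by (intro sum.cong) (simp_all add: lincomb_coords[OF bases restrict])
    finally show ?thesis by (simp add: sum_restrict_fun[OF f])
  qed
  with c show ?thesis by auto
qed

lemma concat_is_basis: "is_basis_of Z (concat Ls)"
  unfolding is_basis_of_def
proof (intro conjI ballI)
  show "set (concat Ls) \<subseteq> fun_space Z"
  proof
    fix b assume "b \<in> set (concat Ls)"
    then obtain p r where p: "p < length Ys" and r: "r < length (Ls ! p)" and b: "b = Ls ! p ! r"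
      using length_Ls by (auto simp: in_set_conv_nth)
    have "Ys ! p \<subseteq> Z" using union p by auto
    then show "b \<in> fun_space Z" using fun_space_mono basis_in_fun_space[OF bases[OF p] r] b by blast
  qed
  fix f assume f: "f \<in> fun_space Z"
  have unique: "c = c'" if c: "c \<in> carrier_vec (length (concat Ls))" "c' \<in> carrier_vec (length (concat Ls))"
    and eq: "lincomb c (concat Ls) = lincomb c' (concat Ls)" for c c'
  proof (rule eq_vecI)
    fix i assume "i < dim_vec c'"
    then obtain p r where p: "p < length Ys" and r: "r < length (Ls ! p)" and i: "i = concat_index p r"
      using block_start_decomp[of i "map length Ls"] c(2) length_Ls by (auto simp: length_concat)
    show "c $ i = c' $ i"
      unfolding i coords_restrict_lincomb_concat[OF p r, symmetric] eq ..
  qed (use c in simp)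
  obtain c where "c \<in> carrier_vec (length (concat Ls))" "lincomb c (concat Ls) = f"
    using lincomb_concat_exists[OF f] by blast
  with unique show "\<exists>!c. c \<in> carrier_vec (length (concat Ls)) \<and> f = lincomb c (concat Ls)"
    by (intro ex1I[of _ c]) auto
qed

lemma coords_concat:
  assumes f: "f \<in> fun_space Z" and p: "p < length Ys" and r: "r < length (Ls ! p)"
  shows "coords (concat Ls) f $ concat_index p r = coords (Ls ! p) (restrict_fun (Ys ! p) f) $ r"
  using coords_restrict_lincomb_concat[OF p r, of "coords (concat Ls) f"]
  by (simp add: lincomb_coords[OF concat_is_basis f])

end

section \<open>One refinement step\<close>

lemma card_less_eq_sum: "card {j. j < (n::nat) \<and> P j} = (\<Sum>j<n. if P j then 1 else 0)"
proof -
  have "{j. j < n \<and> P j} = {j \<in> {..<n}. P j}" by auto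
  then show ?thesis by (simp add: sum.inter_filter[symmetric])
qed

text \<open>A nonzero row with \<open>k\<close> nonzero entries costs \<open>2k - 1 < 2k\<close> operations.\<close>

lemma sparse_matvec_ops_less:
  fixes C :: "complex mat"
  assumes j0: "j0 < dim_col C" "C $$ (0, j0) \<noteq> 0" and rows: "0 < dim_row C"
  shows "sparse_matvec_ops C < 2 * (\<Sum>i<dim_row C. \<Sum>j<dim_col C. if C $$ (i, j) \<noteq> 0 then 1 else 0)"
proof -
  define k where "k i = card {j. j < dim_col C \<and> C $$ (i, j) \<noteq> 0}" for i
  have "0 < k 0" unfolding k_def using j0 by (auto simp: card_gt_0_iff)
  then have "sparse_matvec_ops C < (\<Sum>i<dim_row C. 2 * k i)"
    unfolding sparse_matvec_ops_def Let_def k_def[symmetric]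
    by (intro sum_strict_mono_ex1) (use rows in auto)
  then show ?thesis by (simp add: k_def card_less_eq_sum sum_distrib_left)
qed

lemma (in group) partition_bases_rcosets:
  assumes K: "subgroup K G" and Ys: "distinct Ys" "set Ys = rcosets K"
    and Ls: "length Ls = length Ys" "\<And>p. p < length Ys \<Longrightarrow> is_basis_of (Ys ! p) (Ls ! p)"
  shows "partition_bases Ys Ls (carrier G)"
proof
  fix p p' assume "p < length Ys" "p' < length Ys" "p \<noteq> p'"
  then have "Ys ! p \<in> rcosets K" "Ys ! p' \<in> rcosets K" "Ys ! p \<noteq> Ys ! p'"
    using Ys nth_mem nth_eq_iff_index_eq by blast+
  then show "Ys ! p \<inter> Ys ! p' = {}" using rcos_disjoint[OF K] unfolding pairwise_def disjnt_def by blast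
qed (use Ls Ys rcosets_part_G[OF K] in auto)

context subgroup_irreps
begin

lemma multiplicity_in_rcoset:
  assumes fin: "finite (carrier G)" and K: "subgroup K G" and HK: "H \<subseteq> K" and Y: "Y \<in> rcosets K"
    and L: "adapted_basis Y L \<rho>s" and \<rho>: "\<rho> \<in> R"
  shows "count_list \<rho>s \<rho> \<le> (card K div card H) * rep_dim G \<rho>"
proof -
  obtain X0 where "finite X0" "X0 \<subseteq> carrier G" "card X0 \<le> card K div card H" "Y \<subseteq> (\<Union>x\<in>X0. H #> x)"
    using rcoset_covered_by_rcosets[OF fin subgroup_H K HK Y] .
  then show ?thesis using adapted_basis_multiplicity[OF L \<rho>] by (meson le_trans mult_right_mono zero_le)
qed

lemma finite_R_if_adapted_basis:
  assumes "adapted_basis H L \<rho>s"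
  shows "finite R"
  using irrep_in_adapted_basis[OF assms] finite_subset[of R "set \<rho>s"] by blast

end

text \<open>\<open>Ys\<close> and \<open>Ys'\<close> list the orbits of \<open>K\<close> and of \<open>H \<subseteq> K\<close> on \<open>G\<close>; \<open>B\<close> and \<open>B'\<close> concatenate
  bases of the orbit spaces that are adapted to the same set \<open>R\<close> of irreducibles of \<open>H\<close>.\<close>

locale refinement_step = subgroup_irreps +
  fixes K :: "'a set"
    and Ys Ys' :: "'a set list"
    and Ls Ls' :: "('a \<Rightarrow> complex) list list"
    and \<rho>ss \<rho>ss' :: "('a \<Rightarrow> complex mat) list list"
  assumes finite_G: "finite (carrier G)" and subgroup_K: "subgroup K G" and H_le_K: "H \<subseteq> K"
    and orbits: "distinct Ys" "set Ys = rcosets K" "length Ls = length Ys" "length \<rho>ss = length Ys"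
    and adapted: "\<And>p. p < length Ys \<Longrightarrow> adapted_basis (Ys ! p) (Ls ! p) (\<rho>ss ! p)"
    and orbits': "distinct Ys'" "set Ys' = rcosets H" "length Ls' = length Ys'" "length \<rho>ss' = length Ys'"
    and adapted': "\<And>p. p < length Ys' \<Longrightarrow> adapted_basis (Ys' ! p) (Ls' ! p) (\<rho>ss' ! p)"
begin

abbreviation B :: "('a \<Rightarrow> complex) list" where "B \<equiv> concat Ls"
abbreviation B' :: "('a \<Rightarrow> complex) list" where "B' \<equiv> concat Ls'"
abbreviation q :: nat where "q \<equiv> card K div card H"

sublocale partition: partition_bases Ys Ls "carrier G"
  by (rule partition_bases_rcosets[OF subgroup_K orbits(1-3)]) (use adapted adapted_basisD(1) in blast)

sublocale partition': partition_bases Ys' Ls' "carrier G"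
  by (rule partition_bases_rcosets[OF subgroup_H orbits'(1-3)]) (use adapted' adapted_basisD(1) in blast)

lemma Ys_rcosets: "p < length Ys \<Longrightarrow> Ys ! p \<in> rcosets K"
  using orbits(2) nth_mem by blast

lemma Ys'_rcosets: "p' < length Ys' \<Longrightarrow> Ys' ! p' \<in> rcosets H"
  using orbits'(2) nth_mem by blast

lemma coords_B_B'_entry:
  assumes p: "p < length Ys" and r: "r < length (Ls ! p)" and p': "p' < length Ys'" and r': "r' < length (Ls' ! p')"
  shows "coords B (B' ! partition'.concat_index p' r') $ partition.concat_index p r =
    (if Ys' ! p' \<subseteq> Ys ! p then coords (Ls ! p) (Ls' ! p' ! r') $ r else 0)"
proof -
  have B'_nth: "B' ! partition'.concat_index p' r' = Ls' ! p' ! r'"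
    by (rule nth_concat_block_start) (use p' r' orbits'(3) in auto)
  have b: "Ls' ! p' ! r' \<in> fun_space (Ys' ! p')"
    by (rule basis_in_fun_space[OF adapted_basisD(1)[OF adapted'[OF p']] r'])
  then have "Ls' ! p' ! r' \<in> fun_space (carrier G)"
    using fun_space_mono[of "Ys' ! p'" "carrier G"] Ys'_rcosets[OF p'] rcosets_part_G[OF subgroup_H]
    by blast
  then have "coords B (Ls' ! p' ! r') $ partition.concat_index p r =
      coords (Ls ! p) (restrict_fun (Ys ! p) (Ls' ! p' ! r')) $ r"
    by (rule partition.coords_concat[OF _ p r])
  also have "\<dots> = (if Ys' ! p' \<subseteq> Ys ! p then coords (Ls ! p) (Ls' ! p' ! r') $ r else 0)"
  proof (cases "Ys' ! p' \<subseteq> Ys ! p")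
    case True
    then have "restrict_fun (Ys ! p) (Ls' ! p' ! r') = Ls' ! p' ! r'"
      using b unfolding restrict_fun_def fun_space_def by (intro ext) auto
    with True show ?thesis by simp
  next
    case False
    then have "Ys' ! p' \<inter> Ys ! p = {}"
      using rcoset_subset_rcoset[OF subgroup_H subgroup_K H_le_K Ys'_rcosets[OF p'] Ys_rcosets[OF p]] by blast
    then have "restrict_fun (Ys ! p) (Ls' ! p' ! r') = (\<lambda>x. 0)"
      using b unfolding restrict_fun_def fun_space_def by (intro ext) auto
    with False show ?thesis using coords_zero[OF adapted_basisD(1)[OF adapted[OF p]]] r by simp
  qed
  finally show ?thesis unfolding B'_nth .
qed

lemma finite_R: "finite R"
proof -
  have "H \<in> rcosets H"
    using rcosetsI[OF subgroup.subset[OF subgroup_H] one_closed] coset_mult_one[OF subgroup.subset[OF subgroup_H]]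
    by simp
  then obtain p' where "p' < length Ys'" "Ys' ! p' = H" using orbits'(2) by (metis in_set_conv_nth)
  then show ?thesis using finite_R_if_adapted_basis adapted' by metis
qed

lemma nonzero_coords_count_le:
  "(\<Sum>i<length B. \<Sum>j<length B'. if coords B (B' ! j) $ i \<noteq> 0 then 1 else 0) \<le>
    (\<Sum>p<length Ys. \<Sum>p'<length Ys'. if Ys' ! p' \<subseteq> Ys ! p then
      \<Sum>s<length (\<rho>ss ! p). count_list (\<rho>ss' ! p') (\<rho>ss ! p ! s) * rep_dim G (\<rho>ss ! p ! s) else 0)"
proof -
  let ?N = "\<lambda>i j. if coords B (B' ! j) $ i \<noteq> 0 then 1 else (0::nat)"
  let ?blocks = "\<lambda>p p'. \<Sum>r<length (Ls ! p). \<Sum>r'<length (Ls' ! p').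
    ?N (partition.concat_index p r) (partition'.concat_index p' r')"
  have "(\<Sum>i<length B. \<Sum>j<length B'. ?N i j) = (\<Sum>p<length Ys. \<Sum>r<length (Ls ! p). \<Sum>p'<length Ys'.
      \<Sum>r'<length (Ls' ! p'). ?N (partition.concat_index p r) (partition'.concat_index p' r'))"
    unfolding length_concat sum_lessThan_sum_list_blocks using orbits(3) orbits'(3) by simp
  also have "\<dots> = (\<Sum>p<length Ys. \<Sum>p'<length Ys'. ?blocks p p')"
    by (rule sum.cong[OF refl]) (rule sum.swap)
  also have "\<dots> \<le> (\<Sum>p<length Ys. \<Sum>p'<length Ys'. if Ys' ! p' \<subseteq> Ys ! p then
      \<Sum>s<length (\<rho>ss ! p). count_list (\<rho>ss' ! p') (\<rho>ss ! p ! s) * rep_dim G (\<rho>ss ! p ! s) else 0)"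
  proof (intro sum_mono)
    fix p p' assume "p \<in> {..<length Ys}" "p' \<in> {..<length Ys'}"
    then have p: "p < length Ys" and p': "p' < length Ys'" by auto
    have "?blocks p p' = (if Ys' ! p' \<subseteq> Ys ! p then \<Sum>r<length (Ls ! p). \<Sum>r'<length (Ls' ! p').
        if coords (Ls ! p) (Ls' ! p' ! r') $ r \<noteq> 0 then 1 else 0 else 0)"
      by (simp add: coords_B_B'_entry[OF p _ p'])
    then show "?blocks p p' \<le> (if Ys' ! p' \<subseteq> Ys ! p then
        \<Sum>s<length (\<rho>ss ! p). count_list (\<rho>ss' ! p') (\<rho>ss ! p ! s) * rep_dim G (\<rho>ss ! p ! s) else 0)"
      using adapted_bases_coords_nonzero_count[OF adapted[OF p] adapted'[OF p']] by simp
  qed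
  finally show ?thesis .
qed

lemma card_nested_orbits:
  assumes p: "p < length Ys"
  shows "card {p'. p' < length Ys' \<and> Ys' ! p' \<subseteq> Ys ! p} \<le> q"
proof -
  let ?C = "{Y' \<in> rcosets H. Y' \<subseteq> Ys ! p}"
  have "inj_on ((!) Ys') {p'. p' < length Ys' \<and> Ys' ! p' \<subseteq> Ys ! p}"
    using orbits'(1) by (auto simp: inj_on_def nth_eq_iff_index_eq)
  then have "card {p'. p' < length Ys' \<and> Ys' ! p' \<subseteq> Ys ! p} = card ((!) Ys' ` {p'. p' < length Ys' \<and> Ys' ! p' \<subseteq> Ys ! p})"
    by (rule card_image[symmetric])
  also have "\<dots> \<le> card ?C"
    by (rule card_mono[OF finite_subset[of _ "Pow (carrier G)"]])
      (use rcosets_subset_PowG[OF subgroup_H] finite_G Ys'_rcosets in auto)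
  also have "card ?C = q"
    using card_rcosets_in_rcoset[OF finite_G subgroup_H subgroup_K H_le_K Ys_rcosets[OF p]]
      card_subgroup_pos[OF finite_G subgroup_H] by (metis nonzero_mult_div_cancel_right not_gr0)
  finally show ?thesis .
qed

lemma orbit_bound:
  assumes p: "p < length Ys"
  shows "(\<Sum>p'<length Ys'. if Ys' ! p' \<subseteq> Ys ! p then
      \<Sum>s<length (\<rho>ss ! p). count_list (\<rho>ss' ! p') (\<rho>ss ! p ! s) * rep_dim G (\<rho>ss ! p ! s) else 0)
    \<le> q ^ 2 * d3 G R"
proof -
  let ?D = "\<Sum>s<length (\<rho>ss ! p). rep_dim G (\<rho>ss ! p ! s) ^ 2"
  have H_div_H: "card H div card H = 1" using card_subgroup_pos[OF finite_G subgroup_H] by simp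
  have "(\<Sum>s<length (\<rho>ss ! p). count_list (\<rho>ss' ! p') (\<rho>ss ! p ! s) * rep_dim G (\<rho>ss ! p ! s)) \<le> ?D"
    if p': "p' < length Ys'" for p'
    using multiplicity_in_rcoset[OF finite_G subgroup_H order.refl Ys'_rcosets[OF p'] adapted'[OF p']]
      adapted_basisD(2)[OF adapted[OF p]]
    by (intro sum_mono) (simp add: H_div_H power2_eq_square mult_right_mono)
  then have "(\<Sum>p'<length Ys'. if Ys' ! p' \<subseteq> Ys ! p then
      \<Sum>s<length (\<rho>ss ! p). count_list (\<rho>ss' ! p') (\<rho>ss ! p ! s) * rep_dim G (\<rho>ss ! p ! s) else 0)
    \<le> (\<Sum>p'<length Ys'. if Ys' ! p' \<subseteq> Ys ! p then ?D else 0)"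
    by (intro sum_mono) auto
  also have "\<dots> = card {p'. p' < length Ys' \<and> Ys' ! p' \<subseteq> Ys ! p} * ?D"
    by (simp add: card_less_eq_sum sum_distrib_right if_distrib[of "\<lambda>x. x * ?D"] cong: if_cong)
  also have "\<dots> \<le> q * ?D" using card_nested_orbits[OF p] by (rule mult_right_mono) simp
  also have "?D = (\<Sum>\<rho>\<in>R. count_list (\<rho>ss ! p) \<rho> * rep_dim G \<rho> ^ 2)"
  proof -
    have "set (\<rho>ss ! p) \<subseteq> R" using adapted_basisD(2)[OF adapted[OF p]] by (auto simp: in_set_conv_nth)
    from sum_list_map_eq_sum_count2[OF this finite_R, of "\<lambda>\<rho>. rep_dim G \<rho> ^ 2"]
    show ?thesis by (simp add: sum_list_sum_nth atLeast0LessThan)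
  qed
  also have "\<dots> \<le> (\<Sum>\<rho>\<in>R. q * rep_dim G \<rho> * rep_dim G \<rho> ^ 2)"
    using multiplicity_in_rcoset[OF finite_G subgroup_K H_le_K Ys_rcosets[OF p] adapted[OF p]]
    by (intro sum_mono mult_right_mono) auto
  also have "q * \<dots> = q ^ 2 * d3 G R"
    unfolding d3_def by (simp add: sum_distrib_left power2_eq_square power3_eq_cube mult_ac)
  finally show ?thesis by simp
qed

theorem sparse_matvec_ops_change_mat_less:
  "sparse_matvec_ops (change_mat B B') < 2 * (q ^ 2 * card (rcosets K) * d3 G R)"
proof -
  let ?C = "change_mat B B'"
  have "0 < length B" by (rule basis_length_pos[OF partition.concat_is_basis one_closed])
  moreover obtain j0 where "j0 < length B'" "?C $$ (0, j0) \<noteq> 0"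
    using change_mat_row_nonzero[OF partition.concat_is_basis partition'.concat_is_basis \<open>0 < length B\<close>]
    by blast
  ultimately have "sparse_matvec_ops ?C <
      2 * (\<Sum>i<length B. \<Sum>j<length B'. if coords B (B' ! j) $ i \<noteq> 0 then 1 else 0)"
    using sparse_matvec_ops_less[of j0 ?C] by (simp add: change_mat_def)
  also have "\<dots> \<le> 2 * (\<Sum>p<length Ys. \<Sum>p'<length Ys'. if Ys' ! p' \<subseteq> Ys ! p then
      \<Sum>s<length (\<rho>ss ! p). count_list (\<rho>ss' ! p') (\<rho>ss ! p ! s) * rep_dim G (\<rho>ss ! p ! s) else 0)"
    using nonzero_coords_count_le by simp
  also have "\<dots> \<le> 2 * (\<Sum>p<length Ys. q ^ 2 * d3 G R)"
    using orbit_bound by (intro mult_left_mono sum_mono) auto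
  also have "\<dots> = 2 * (q ^ 2 * card (rcosets K) * d3 G R)"
    using distinct_card[OF orbits(1)] orbits(2) by simp
  finally show ?thesis .
qed

end

lemma one_dim_rep_irrep:
  assumes \<rho>: "is_mat_rep G H 1 \<rho>"
  shows "is_irrep G H \<rho>"
proof -
  have dim: "rep_dim G \<rho> = 1" using \<rho> unfolding is_mat_rep_def rep_dim_def by simp
  have "W = carrier_vec 1" if W: "is_invariant_subspace H 1 \<rho> W" and "W \<noteq> {0\<^sub>v 1}" for W
  proof -
    have Wc: "W \<subseteq> carrier_vec 1" and "0\<^sub>v 1 \<in> W" and smult: "\<And>a v. v \<in> W \<Longrightarrow> a \<cdot>\<^sub>v v \<in> W"
      using W unfolding is_invariant_subspace_def by auto
    with \<open>W \<noteq> _\<close> obtain v where v: "v \<in> W" "v \<noteq> 0\<^sub>v 1" by blast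
    with Wc have v0: "v $ 0 \<noteq> 0" by (metis carrier_vecD eq_vecI index_zero_vec less_one subsetD)
    have "w \<in> W" if "w \<in> carrier_vec 1" for w
    proof -
      have "(w $ 0 / v $ 0) \<cdot>\<^sub>v v = w" using that Wc v v0 by (intro eq_vecI) auto
      then show ?thesis using smult[OF v(1)] by metis
    qed
    with Wc show "W = carrier_vec 1" by blast
  qed
  then show ?thesis unfolding is_irrep_def Let_def dim using \<rho> by auto
qed

context subgroup_irreps
begin

text \<open>The orbits of \<open>K\<close> acting on \<open>G\<close> by left multiplication are the right cosets \<open>K #> x\<close>.\<close>

definition orbit_adapted :: "'a set \<Rightarrow> ('a \<Rightarrow> complex) list \<Rightarrow> bool" where
  "orbit_adapted K B \<longleftrightarrow> (\<exists>Ys Ls. distinct Ys \<and> set Ys = rcosets K \<and> length Ls = length Ys \<and>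
     (\<forall>p<length Ys. is_basis_of (Ys ! p) (Ls ! p) \<and> sym_adapted G H R (Ls ! p)) \<and> B = concat Ls)"

lemma adapted_basis_if_sym_adapted:
  assumes K: "subgroup K G" and HK: "H \<subseteq> K" and Y: "Y \<in> rcosets K"
    and L: "is_basis_of Y L" "sym_adapted G H R L"
  shows "\<exists>\<rho>s. adapted_basis Y L \<rho>s"
proof -
  obtain x where "x \<in> carrier G" "Y = K #> x" using Y unfolding RCOSETS_def by blast
  then have "h <# Y \<subseteq> Y" if "h \<in> H" for h using l_coset_r_coset_subset[OF K] that HK by blast
  with L show ?thesis unfolding adapted_basis_def sym_adapted_def by blast
qed

lemma orbit_adapted_step:
  assumes fin: "finite (carrier G)" and K: "subgroup K G" and HK: "H \<subseteq> K"
    and B: "orbit_adapted K B" and B': "orbit_adapted H B'"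
  shows "is_basis_of (carrier G) B" "is_basis_of (carrier G) B'"
    and "sparse_matvec_ops (change_mat B B') < 2 * ((card K div card H) ^ 2 * card (rcosets K) * d3 G R)"
proof -
  have choose_reps: "\<exists>\<rho>ss. length \<rho>ss = length Ys \<and> (\<forall>p<length Ys. adapted_basis (Ys ! p) (Ls ! p) (\<rho>ss ! p))"
    if K': "subgroup K' G" "H \<subseteq> K'" and Ys: "set Ys = rcosets K'"
      and Ls: "\<forall>p<length Ys. is_basis_of (Ys ! p) (Ls ! p) \<and> sym_adapted G H R (Ls ! p)" for K' Ys Ls
  proof -
    have "\<forall>p<length Ys. \<exists>\<rho>s. adapted_basis (Ys ! p) (Ls ! p) \<rho>s"
      using adapted_basis_if_sym_adapted[OF K'] Ys Ls nth_mem by blast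
    then obtain f where "\<forall>p<length Ys. adapted_basis (Ys ! p) (Ls ! p) (f p)" by metis
    then show ?thesis by (intro exI[of _ "map f [0..<length Ys]"]) simp
  qed
  obtain Ys Ls \<rho>ss where "distinct Ys" "set Ys = rcosets K" "length Ls = length Ys" "length \<rho>ss = length Ys"
    "\<forall>p<length Ys. adapted_basis (Ys ! p) (Ls ! p) (\<rho>ss ! p)" "B = concat Ls"
    using B choose_reps[OF K HK] unfolding orbit_adapted_def by metis
  moreover obtain Ys' Ls' \<rho>ss' where "distinct Ys'" "set Ys' = rcosets H" "length Ls' = length Ys'"
    "length \<rho>ss' = length Ys'" "\<forall>p<length Ys'. adapted_basis (Ys' ! p) (Ls' ! p) (\<rho>ss' ! p)" "B' = concat Ls'"
    using B' choose_reps[OF subgroup_H order.refl] unfolding orbit_adapted_def by metis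
  ultimately interpret refinement_step G H R K Ys Ys' Ls Ls' \<rho>ss \<rho>ss'
    using fin K HK by (intro refinement_step.intro subgroup_irreps_axioms refinement_step_axioms.intro)
      (auto simp: subgroup_irreps_def)
  show "is_basis_of (carrier G) B" "is_basis_of (carrier G) B'"
    using partition.concat_is_basis partition'.concat_is_basis \<open>B = _\<close> \<open>B' = _\<close> by auto
  show "sparse_matvec_ops (change_mat B B') < 2 * ((card K div card H) ^ 2 * card (rcosets K) * d3 G R)"
    using sparse_matvec_ops_change_mat_less \<open>B = _\<close> \<open>B' = _\<close> by simp
qed

end

lemma singleton_basis: "is_basis_of {x} [\<lambda>y. if y = x then 1 else 0]"
  unfolding is_basis_of_def
proof (intro conjI ballI)
  let ?\<delta> = "\<lambda>y. if y = x then 1 else (0::complex)"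
  show "set [?\<delta>] \<subseteq> fun_space {x}" unfolding fun_space_def by auto
  fix f assume f: "f \<in> fun_space {x}"
  have "lincomb c [?\<delta>] = (\<lambda>y. if y = x then c $ 0 else 0)" for c
    unfolding lincomb_def by auto
  with f have iff: "f = lincomb c [?\<delta>] \<longleftrightarrow> c $ 0 = f x" for c
    unfolding fun_space_def by (auto simp: fun_eq_iff)
  show "\<exists>!c. c \<in> carrier_vec (length [?\<delta>]) \<and> f = lincomb c [?\<delta>]"
  proof (rule ex1I[of _ "vec 1 (\<lambda>_. f x)"])
    fix c assume c: "c \<in> carrier_vec (length [?\<delta>]) \<and> f = lincomb c [?\<delta>]"
    then have "c $ 0 = f x" using iff by blast
    with c show "c = vec 1 (\<lambda>_. f x)" by (intro eq_vecI) auto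
  qed (use iff in simp)
qed

lemma (in group) standard_basis_orbit_adapted:
  assumes R: "complete_irreps G {\<one>} R" and xs: "distinct xs" "set xs = carrier G"
  shows "subgroup_irreps.orbit_adapted G {\<one>} R {\<one>} (map (\<lambda>x y. if y = x then 1 else 0) xs)"
proof -
  interpret subgroup_irreps G "{\<one>}" R by unfold_locales (use triv_subgroup R in auto)
  have "is_irrep G {\<one>} (\<lambda>_. 1\<^sub>m 1 :: complex mat)"
    by (rule one_dim_rep_irrep) (simp add: is_mat_rep_def)
  then obtain \<rho>0 where \<rho>0: "\<rho>0 \<in> R" "equiv_reps G {\<one>} (\<lambda>_. 1\<^sub>m 1) \<rho>0"
    using R unfolding complete_irreps_def by blast
  then have \<rho>0_one: "\<rho>0 \<one> = 1\<^sub>m 1"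
    using is_irrepD(1)[OF irrep_R[OF \<rho>0(1)]] unfolding equiv_reps_def rep_dim_def is_mat_rep_def by simp
  define \<delta> :: "'a \<Rightarrow> 'a \<Rightarrow> complex" where "\<delta> x = (\<lambda>y. if y = x then 1 else 0)" for x
  have basis: "is_basis_of {x} [\<delta> x]" for x unfolding \<delta>_def by (rule singleton_basis)
  have "sym_adapted G {\<one>} R [\<delta> x]" if "x \<in> carrier G" for x
  proof -
    have "reg_act G \<one> (\<delta> x) = \<delta> x" using that unfolding reg_act_def \<delta>_def by auto
    then have "act_mat G [\<delta> x] \<one> = 1\<^sub>m 1"
      using coords_basis_nth[OF basis, of 0 x] by (intro eq_matI) (auto simp: act_mat_def)
    then show ?thesis unfolding sym_adapted_def using \<rho>0(1) \<rho>0_one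
      by (intro exI[of _ "[\<rho>0]"]) (auto intro!: eq_matI)
  qed
  moreover have "{\<one>} #> x = {x}" if "x \<in> carrier G" for x using that unfolding r_coset_def by auto
  moreover have "xs ! p \<in> carrier G" if "p < length xs" for p using xs(2) nth_mem[OF that] by blast
  ultimately show ?thesis unfolding orbit_adapted_def using xs basis
    by (intro exI[of _ "map (\<lambda>x. {x}) xs"] exI[of _ "map (\<lambda>x. [\<delta> x]) xs"])
      (auto simp: distinct_map inj_on_def RCOSETS_def \<delta>_def concat_map_singleton)
qed

locale subgroup_chain = group G for G (structure) +
  fixes n :: nat
    and Gs :: "nat \<Rightarrow> 'a set"
    and R :: "nat \<Rightarrow> ('a \<Rightarrow> complex mat) set"
    and B :: "nat \<Rightarrow> ('a \<Rightarrow> complex) list"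
  assumes finite_G: "finite (carrier G)"
    and two_le_n: "2 \<le> n"
    and subgroup_Gs: "\<And>j. j \<in> {1..n} \<Longrightarrow> subgroup (Gs j) G"
    and Gs_1: "Gs 1 = {\<one>}" and Gs_n: "Gs n = carrier G"
    and Gs_psubset: "\<And>j. j \<in> {2..n} \<Longrightarrow> Gs (j - 1) \<subset> Gs j"
    and complete_Rs: "\<And>j. j \<in> {1..n} \<Longrightarrow> complete_irreps G (Gs j) (R j)"
    and B_1: "\<exists>xs. distinct xs \<and> set xs = carrier G \<and> B 1 = map (\<lambda>x y. if y = x then 1 else 0) xs"
    and B_orbital: "\<And>j. j \<in> {2..n} \<Longrightarrow> orbital_sab G Gs R j (B j)"
begin

abbreviation index :: "nat \<Rightarrow> nat" where
  "index k \<equiv> card (Gs k) div card (Gs (k - 1))"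

lemma refinement_bound:
  assumes j: "j \<in> {2..n}"
  shows "is_basis_of (carrier G) (B j)" "is_basis_of (carrier G) (B (j - 1))"
    and "sparse_matvec_ops (change_mat (B j) (B (j - 1))) <
      2 * (index j ^ 2 * card (rcosets (Gs j)) * d3 G (R (j - 1)))"
proof -
  have j1: "j - 1 \<in> {1..n}" using j by auto
  interpret subgroup_irreps G "Gs (j - 1)" "R (j - 1)"
    using subgroup_Gs[OF j1] complete_Rs[OF j1]
    by (simp add: subgroup_irreps_def subgroup_irreps_axioms_def is_group)
  have sab: "orbit_adapted (Gs i) (B i)" if "i \<in> {2..n}" "j - 1 \<in> {1..i}" for i
    using B_orbital[OF that(1)] that(2) unfolding orbital_sab_def orbit_adapted_def by metis
  have "orbit_adapted (Gs (j - 1)) (B (j - 1))"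
  proof (cases "j = 2")
    case True
    with B_1 complete_Rs[of 1] two_le_n show ?thesis
      using standard_basis_orbit_adapted Gs_1 by auto
  next
    case False
    with j have "j - 1 \<in> {2..n}" "j - 1 \<in> {1..j - 1}" by auto
    then show ?thesis by (rule sab)
  qed
  moreover have "orbit_adapted (Gs j) (B j)" using sab j by auto
  ultimately show "is_basis_of (carrier G) (B j)" "is_basis_of (carrier G) (B (j - 1))"
    and "sparse_matvec_ops (change_mat (B j) (B (j - 1))) <
      2 * (index j ^ 2 * card (rcosets (Gs j)) * d3 G (R (j - 1)))"
    using orbit_adapted_step[OF finite_G subgroup_Gs[of j]] Gs_psubset[OF j] j by auto
qed

lemma is_basis_B: "j \<in> {1..n} \<Longrightarrow> is_basis_of (carrier G) (B j)"
  using refinement_bound(1) refinement_bound(2)[of 2] two_le_n by (cases "j = 1") auto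

lemma card_rcosets_Gs:
  assumes "j \<le> n" "1 \<le> j"
  shows "card (rcosets (Gs j)) = (\<Prod>k = j + 1..n. index k)"
  using assms
proof (induction rule: inc_induct)
  case base
  have "card (rcosets (Gs n)) * card (Gs n) = card (Gs n)"
    using lagrange[OF subgroup_Gs[of n]] Gs_n two_le_n by (simp add: Coset.order_def)
  then show ?case using card_subgroup_pos[OF finite_G subgroup_Gs[of n]] two_le_n by simp
next
  case (step j)
  have j: "j \<in> {1..n}" "Suc j \<in> {1..n}" using step by auto
  have "card (rcosets (Gs j)) * card (Gs j) = card (rcosets (Gs (Suc j))) * card (Gs (Suc j))"
    using lagrange[OF subgroup_Gs[OF j(1)]] lagrange[OF subgroup_Gs[OF j(2)]] by simp
  also have "card (Gs (Suc j)) = index (Suc j) * card (Gs j)"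
  proof -
    note H = subgroup_Gs[OF j(1)] and K = subgroup_Gs[OF j(2)]
    have HK: "Gs j \<subseteq> Gs (Suc j)" using Gs_psubset[of "Suc j"] step.prems step.hyps by auto
    have "Gs (Suc j) \<in> rcosets (Gs (Suc j))"
      using rcosetsI[OF subgroup.subset[OF K] one_closed] coset_mult_one[OF subgroup.subset[OF K]] by simp
    from card_rcosets_in_rcoset[OF finite_G H K HK this]
    obtain c where c: "c * card (Gs j) = card (Gs (Suc j))" by blast
    then have "index (Suc j) = c" using card_subgroup_pos[OF finite_G H] by (simp flip: c)
    with c show ?thesis by simp
  qed
  finally have "card (rcosets (Gs j)) = index (Suc j) * card (rcosets (Gs (Suc j)))"
    using card_subgroup_pos[OF finite_G subgroup_Gs[OF j(1)]] by (simp add: mult.assoc mult.commute)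
  with step show ?case using j by (simp add: prod.atLeast_Suc_atMost)
qed

end

theorem theorem6:
  fixes G :: "('a, 'b) monoid_scheme"
    and n :: nat
    and Gs :: "nat \<Rightarrow> 'a set"
    and R :: "nat \<Rightarrow> ('a \<Rightarrow> complex mat) set"
    and B :: "nat \<Rightarrow> ('a \<Rightarrow> complex) list"
  assumes grp: "group G" and fin: "finite (carrier G)"
    and n2: "2 \<le> n"
    and sub: "\<And>j. j \<in> {1..n} \<Longrightarrow> subgroup (Gs j) G"
    and G1: "Gs 1 = {\<one>\<^bsub>G\<^esub>}" and Gn: "Gs n = carrier G"
    and chain: "\<And>j. j \<in> {2..n} \<Longrightarrow> Gs (j - 1) \<subset> Gs j"
    and RG: "\<And>j. j \<in> {1..n} \<Longrightarrow> complete_irreps G (Gs j) (R j)"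
    and compat: "\<exists>Bc. is_basis_of (carrier G) Bc \<and> (\<forall>i \<in> {1..n}. sym_adapted G (Gs i) (R i) Bc)"
    and B1: "\<exists>xs. distinct xs \<and> set xs = carrier G \<and>
               B 1 = map (\<lambda>x y. if y = x then 1 else 0) xs"
    and Bj: "\<And>j. j \<in> {2..n} \<Longrightarrow> orbital_sab G Gs R j (B j)"
  shows "(\<forall>f \<in> fun_space (carrier G).
            coords (B n) f = fold (\<lambda>j v. change_mat (B j) (B (j - 1)) *\<^sub>v v) [2..<Suc n] (coords (B 1) f))
       \<and> (\<Sum>j = 2..n. sparse_matvec_ops (change_mat (B j) (B (j - 1))))
          < 2 * (\<Sum>j = 2..n. (card (Gs j) div card (Gs (j - 1))) ^ 2
                 * (\<Prod>k = j + 1..n. card (Gs k) div card (Gs (k - 1))) * d3 G (R (j - 1)))"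
proof -
  interpret subgroup_chain G n Gs R B
    by (rule subgroup_chain.intro[OF grp subgroup_chain_axioms.intro[OF fin n2 sub G1 Gn chain RG B1 Bj]])
  have "sparse_matvec_ops (change_mat (B j) (B (j - 1))) <
      2 * (index j ^ 2 * (\<Prod>k = j + 1..n. index k) * d3 G (R (j - 1)))" if "j \<in> {2..n}" for j
    using refinement_bound(3)[OF that] card_rcosets_Gs[of j] that by simp
  then have "(\<Sum>j = 2..n. sparse_matvec_ops (change_mat (B j) (B (j - 1)))) <
      (\<Sum>j = 2..n. 2 * (index j ^ 2 * (\<Prod>k = j + 1..n. index k) * d3 G (R (j - 1))))"
    using n2 by (intro sum_strict_mono) auto
  moreover have "coords (B n) f = fold (\<lambda>j v. change_mat (B j) (B (j - 1)) *\<^sub>v v) [2..<Suc n] (coords (B 1) f)"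
    if "f \<in> fun_space (carrier G)" for f
    by (rule fold_change_mat_mult_coords[where B = B and n = n and m = n, OF is_basis_B that, symmetric])
      (use n2 in auto)
  ultimately show ?thesis by (simp add: sum_distrib_left)
qed

end
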